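(* For every $q\in(0,1/2)$, the functions $L\mapsto T_{\rm rel}(L)$, $L\mapsto T_{\rm mix}(L)$ and $L\mapsto T_{\rm hit}(L)$ are non-decreasing on the positive integers.
   Context: Fix $q\in(0,1/2)$, $p=1-q$. For $\Lambda=\{1,\dots,L\}$ the East process is the Markov chain on $\{0,1\}^\Lambda$ with generator $\mathcal L f(\sigma)=\sum_{x}c_x(\sigma)[\pi_x(f)-f](\sigma)$, $c_1\equiv1$, $c_x(\sigma)=1-\sigma_{x-1}$ ($x\ge2$), $\pi_x(f)$ the average over $\sigma_x\sim$ Bernoulli$(p)$; $\pi$ is the product Bernoulli$(p)$ measure. $T_{\rm rel}(L)$ is the inverse spectral gap; $T_{\rm mix}(L)=\inf\{t:\max_\eta\|\mathbb P_\eta(\eta(t)\in\cdot)-\pi\|_{TV}\le1/4\}$; $T_{\rm hit}(L)=\mathbb E_{\mathbb 10}[\tau_{\eta_L=1}]$ where $\mathbb 10$ has $\sigma_x=1$ for $x<L$, $\sigma_L=0$, and $\tau_{\eta_L=1}$ is the hitting time of $\{\eta_L=1\}$. *)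

theory Defs
  imports "HOL-Analysis.Analysis"
begin

text \<open>Configurations on \<open>\<Lambda> = {1..L}\<close>: \<open>\<sigma> x = True\<close> means \<open>\<sigma>_x = 1\<close>;
  sites outside \<open>{1..L}\<close> are fixed to False so the state space is finite.\<close>
definition east_states :: "nat \<Rightarrow> (nat \<Rightarrow> bool) set" where
  "east_states L = {\<sigma>. \<forall>x. \<sigma> x \<longrightarrow> x \<in> {1..L}}"

definition east_c :: "(nat \<Rightarrow> bool) \<Rightarrow> nat \<Rightarrow> real" where
  "east_c \<sigma> x = (if x = 1 then 1 else if \<sigma> (x - 1) then 0 else 1)"

definition east_gen :: "real \<Rightarrow> nat \<Rightarrow> ((nat \<Rightarrow> bool) \<Rightarrow> real) \<Rightarrow> (nat \<Rightarrow> bool) \<Rightarrow> real" where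
  "east_gen q L f \<sigma> = (\<Sum>x\<in>{1..L}. east_c \<sigma> x *
      ((1 - q) * f (\<sigma>(x := True)) + q * f (\<sigma>(x := False)) - f \<sigma>))"

definition east_rate :: "real \<Rightarrow> nat \<Rightarrow> (nat \<Rightarrow> bool) \<Rightarrow> (nat \<Rightarrow> bool) \<Rightarrow> real" where
  "east_rate q L \<eta> \<sigma> = east_gen q L (\<lambda>\<zeta>. if \<zeta> = \<sigma> then 1 else 0) \<eta>"

definition east_pi :: "real \<Rightarrow> nat \<Rightarrow> (nat \<Rightarrow> bool) \<Rightarrow> real" where
  "east_pi q L \<sigma> = (\<Prod>x\<in>{1..L}. if \<sigma> x then 1 - q else q)"

definition east_gap :: "real \<Rightarrow> nat \<Rightarrow> real" where
  "east_gap q L = Inf {ev. ev > 0 \<and> (\<exists>f. (\<exists>\<sigma>\<in>east_states L. f \<sigma> \<noteq> 0) \<and>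
      (\<forall>\<sigma>\<in>east_states L. - east_gen q L f \<sigma> = ev * f \<sigma>))}"

definition T_rel :: "real \<Rightarrow> nat \<Rightarrow> real" where
  "T_rel q L = 1 / east_gap q L"

fun mat_pow :: "'a set \<Rightarrow> ('a \<Rightarrow> 'a \<Rightarrow> real) \<Rightarrow> nat \<Rightarrow> 'a \<Rightarrow> 'a \<Rightarrow> real" where
  "mat_pow S Q 0 \<eta> \<sigma> = (if \<eta> = \<sigma> then 1 else 0)"
| "mat_pow S Q (Suc n) \<eta> \<sigma> = (\<Sum>\<zeta>\<in>S. Q \<eta> \<zeta> * mat_pow S Q n \<zeta> \<sigma>)"

definition mat_exp :: "'a set \<Rightarrow> ('a \<Rightarrow> 'a \<Rightarrow> real) \<Rightarrow> real \<Rightarrow> 'a \<Rightarrow> 'a \<Rightarrow> real" where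
  "mat_exp S Q t \<eta> \<sigma> = (\<Sum>n. t ^ n / fact n * mat_pow S Q n \<eta> \<sigma>)"

text \<open>Law at time t of the East process started at \<eta>: \<open>P_\<eta>(\<eta>(t) = \<sigma>) = e^{tQ}(\<eta>,\<sigma>)\<close>.\<close>
definition east_heat :: "real \<Rightarrow> nat \<Rightarrow> real \<Rightarrow> (nat \<Rightarrow> bool) \<Rightarrow> (nat \<Rightarrow> bool) \<Rightarrow> real" where
  "east_heat q L t \<eta> \<sigma> = mat_exp (east_states L) (east_rate q L) t \<eta> \<sigma>"

definition east_tv :: "real \<Rightarrow> nat \<Rightarrow> real \<Rightarrow> (nat \<Rightarrow> bool) \<Rightarrow> real" where
  "east_tv q L t \<eta> = (1/2) * (\<Sum>\<sigma>\<in>east_states L. \<bar>east_heat q L t \<eta> \<sigma> - east_pi q L \<sigma>\<bar>)"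

definition T_mix :: "real \<Rightarrow> nat \<Rightarrow> real" where
  "T_mix q L = Inf {t. 0 \<le> t \<and> (\<forall>\<eta>\<in>east_states L. east_tv q L t \<eta> \<le> 1/4)}"

text \<open>Hitting time of \<open>A = {\<eta>_L = 1}\<close>: \<open>P_\<eta>(\<tau>_A > t)\<close> is given by the semigroup of the chain
  killed on entering A (rate matrix restricted to the complement of A), and
  \<open>E_\<eta>[\<tau>_A] = \<integral>_0^\<infinity> P_\<eta>(\<tau>_A > t) dt\<close>.\<close>
definition east_target :: "nat \<Rightarrow> (nat \<Rightarrow> bool) set" where
  "east_target L = {\<sigma>\<in>east_states L. \<sigma> L}"

definition east_survival :: "real \<Rightarrow> nat \<Rightarrow> (nat \<Rightarrow> bool) \<Rightarrow> real \<Rightarrow> real" where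
  "east_survival q L \<eta> t =
     (\<Sum>\<sigma>\<in>east_states L - east_target L.
        mat_exp (east_states L - east_target L) (east_rate q L) t \<eta> \<sigma>)"

definition east_start :: "nat \<Rightarrow> (nat \<Rightarrow> bool)" where
  "east_start L = (\<lambda>x. x \<in> {1..<L})"

definition T_hit :: "real \<Rightarrow> nat \<Rightarrow> real" where
  "T_hit q L = integral {0..} (east_survival q L (east_start L))"

end

theory Submission
  imports Defs "HOL-Probability.Distributions"
begin

text \<open>The East constraint of a site only looks at its left neighbour, so the coordinates
  \<open>{1..L}\<close> of the East process on \<open>{1..L'}\<close>, \<open>L \<le> L'\<close>, evolve as the East process on
  \<open>{1..L}\<close>. Consequently the law of the restricted process at time \<open>t\<close> is the image of the
  law of the larger one, so its total variation distance from equilibrium is smaller, which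
  gives monotonicity of \<open>T_mix\<close>; and every eigenfunction on \<open>{1..L}\<close> lifts to an
  eigenfunction on \<open>{1..L'}\<close> with the same eigenvalue, so the spectral gap can only
  decrease, which gives monotonicity of \<open>T_rel\<close>. That the chain mixes at all, and hence
  that the gap is positive (every eigenvalue is at least \<open>ln 2 / t\<close> once the chain is
  \<open>1/4\<close>-mixed at time \<open>t\<close>), follows from a Doeblin bound for the uniformized chain: from
  any configuration it empties all sites in \<open>L\<close> jumps with probability at least
  \<open>(q/(L+1))^L\<close>.

  For the hitting time, \<open>T_hit(L)\<close> is the value at the start configuration of the solution
  \<open>h_L\<close> of \<open>-Q h = 1\<close> on \<open>{\<eta>_L = 0}\<close>. Lifting \<open>h_L\<close> to \<open>{1..L+1}\<close> as
  \<open>g(\<zeta>) = [\<zeta>_L = 1] h_L(\<zeta> with \<zeta>_L := 0)\<close> gives a subsolution \<open>-Q g \<le> 1\<close> precisely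
  because \<open>q \<le> 1/2\<close>, and the minimum principle for the killed chain yields
  \<open>h_{L+1} \<ge> g\<close>, which at the start configuration reads \<open>T_hit(L+1) \<ge> T_hit(L)\<close>.\<close>

section \<open>Matrix powers and exponentials on a finite index set\<close>

lemma sum_if_eq_mult_left [simp]:
  assumes "finite S"
  shows "(\<Sum>y\<in>S. (if a = y then c else 0) * F y) = (if a \<in> S then c * F a else (0::real))"
proof -
  have "(\<Sum>y\<in>S. (if a = y then c else 0) * F y) = (\<Sum>y\<in>S. if a = y then c * F a else 0)"
    by (intro sum.cong) auto
  then show ?thesis using assms by simp
qed

lemma sum_if_eq_mult_right [simp]:
  assumes "finite S"
  shows "(\<Sum>y\<in>S. F y * (if y = b then c else 0)) = (if b \<in> S then F b * c else (0::real))"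
proof -
  have "(\<Sum>y\<in>S. F y * (if y = b then c else 0)) = (\<Sum>y\<in>S. if b = y then F b * c else 0)"
    by (intro sum.cong) auto
  then show ?thesis using assms by simp
qed

lemma mat_pow_abs_le:
  assumes "finite S" "\<And>a b. \<bar>Q a b\<bar> \<le> B"
  shows "\<bar>mat_pow S Q n a b\<bar> \<le> (real (card S) * B) ^ n"
proof (induction n arbitrary: a)
  case 0 then show ?case by simp
next
  case (Suc n)
  have B0: "0 \<le> B" using assms(2)[of a a] by linarith
  have "\<bar>mat_pow S Q (Suc n) a b\<bar> \<le> (\<Sum>z\<in>S. \<bar>Q a z * mat_pow S Q n z b\<bar>)"
    unfolding mat_pow.simps by (rule sum_abs)
  also have "\<dots> \<le> (\<Sum>z\<in>S. B * (real (card S) * B) ^ n)"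
    unfolding abs_mult by (intro sum_mono mult_mono) (use assms Suc B0 in auto)
  also have "\<dots> = (real (card S) * B) ^ Suc n" by (simp add: algebra_simps)
  finally show ?case .
qed

lemma summable_abs_mat_exp_series:
  assumes "finite S" "\<And>a b. \<bar>Q a b\<bar> \<le> B"
  shows "summable (\<lambda>n. \<bar>t ^ n / fact n * mat_pow S Q n a b\<bar>)"
proof (rule summable_comparison_test')
  show "summable (\<lambda>n. inverse (fact n) * (\<bar>t\<bar> * (real (card S) * B)) ^ n)"
    by (rule summable_exp)
  fix n :: nat
  have "norm \<bar>t ^ n / fact n * mat_pow S Q n a b\<bar> = \<bar>t\<bar>^n / fact n * \<bar>mat_pow S Q n a b\<bar>"
    by (simp add: abs_mult power_abs)
  also have "\<dots> \<le> \<bar>t\<bar>^n / fact n * (real (card S) * B) ^ n"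
    by (intro mult_left_mono mat_pow_abs_le assms) auto
  also have "\<dots> = inverse (fact n) * (\<bar>t\<bar> * (real (card S) * B)) ^ n"
    by (simp add: field_simps)
  finally show "norm \<bar>t ^ n / fact n * mat_pow S Q n a b\<bar>
      \<le> inverse (fact n) * (\<bar>t\<bar> * (real (card S) * B)) ^ n" .
qed

lemma summable_mat_exp_series:
  assumes "finite S" "\<And>a b. \<bar>Q a b\<bar> \<le> B"
  shows "summable (\<lambda>n. t ^ n / fact n * mat_pow S Q n a b)"
  using summable_rabs_cancel[OF summable_abs_mat_exp_series[OF assms]] .

lemma mat_pow_add:
  assumes "finite S" "a \<in> S"
  shows "mat_pow S Q (m + n) a b = (\<Sum>z\<in>S. mat_pow S Q m a z * mat_pow S Q n z b)"
  using assms(2)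
proof (induction m arbitrary: a)
  case 0 then show ?case using assms(1) by simp
next
  case (Suc m)
  have "mat_pow S Q (Suc m + n) a b = (\<Sum>y\<in>S. Q a y * mat_pow S Q (m + n) y b)" by simp
  also have "\<dots> = (\<Sum>y\<in>S. Q a y * (\<Sum>z\<in>S. mat_pow S Q m y z * mat_pow S Q n z b))"
    using Suc by (intro sum.cong) auto
  also have "\<dots> = (\<Sum>y\<in>S. \<Sum>z\<in>S. Q a y * mat_pow S Q m y z * mat_pow S Q n z b)"
    by (simp add: sum_distrib_left mult.assoc)
  also have "\<dots> = (\<Sum>z\<in>S. \<Sum>y\<in>S. Q a y * mat_pow S Q m y z * mat_pow S Q n z b)"
    by (rule sum.swap)
  also have "\<dots> = (\<Sum>z\<in>S. (\<Sum>y\<in>S. Q a y * mat_pow S Q m y z) * mat_pow S Q n z b)"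
    by (simp add: sum_distrib_right)
  finally show ?case by simp
qed

lemma mat_pow_Suc_right:
  assumes "finite S" "a \<in> S" "b \<in> S"
  shows "mat_pow S Q (Suc n) a b = (\<Sum>z\<in>S. mat_pow S Q n a z * Q z b)"
proof -
  have "mat_pow S Q (n + 1) a b = (\<Sum>z\<in>S. mat_pow S Q n a z * mat_pow S Q 1 z b)"
    by (rule mat_pow_add[OF assms(1,2)])
  then show ?thesis using assms by simp
qed

lemma sum_mat_pow_Suc:
  "(\<Sum>b\<in>S. mat_pow S K (Suc n) a b) = (\<Sum>z\<in>S. K a z * (\<Sum>b\<in>S. mat_pow S K n z b))"
  by (simp add: sum_distrib_left) (rule sum.swap)

lemma sum_mat_pow_add:
  assumes "finite S" "a \<in> S"
  shows "(\<Sum>b\<in>S. mat_pow S K (m + n) a b) = (\<Sum>z\<in>S. mat_pow S K m a z * (\<Sum>b\<in>S. mat_pow S K n z b))"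
  by (simp add: mat_pow_add[OF assms] sum_distrib_left) (rule sum.swap)

lemma mat_pow_row_sum:
  assumes "finite S" and row: "\<And>a. a \<in> S \<Longrightarrow> (\<Sum>b\<in>S. K a b) = 1" and "a \<in> S"
  shows "(\<Sum>b\<in>S. mat_pow S K n a b) = 1"
  using assms(3)
proof (induction n arbitrary: a)
  case 0 then show ?case using assms(1) by simp
next
  case (Suc n)
  have "(\<Sum>b\<in>S. mat_pow S K (Suc n) a b) = (\<Sum>z\<in>S. K a z * 1)"
    unfolding sum_mat_pow_Suc using Suc.IH by (intro sum.cong) auto
  then show ?case using row[OF Suc.prems] by simp
qed

lemma mat_pow_superharmonic:
  assumes "finite S" and K_nonneg: "\<And>a b. 0 \<le> K a b"
    and super: "\<And>a. a \<in> S \<Longrightarrow> (\<Sum>b\<in>S. K a b * w b) \<le> w a"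
    and "a \<in> S"
  shows "(\<Sum>b\<in>S. mat_pow S K n a b * w b) \<le> w a"
  using assms(4)
proof (induction n arbitrary: a)
  case 0 then show ?case using assms(1) by simp
next
  case (Suc n)
  have "(\<Sum>b\<in>S. mat_pow S K (Suc n) a b * w b) = (\<Sum>z\<in>S. \<Sum>b\<in>S. K a z * (mat_pow S K n z b * w b))"
    by (subst sum.swap) (simp add: sum_distrib_right mult.assoc)
  also have "\<dots> = (\<Sum>z\<in>S. K a z * (\<Sum>b\<in>S. mat_pow S K n z b * w b))" by (simp add: sum_distrib_left)
  also have "\<dots> \<le> (\<Sum>z\<in>S. K a z * w z)" by (intro sum_mono mult_left_mono Suc.IH K_nonneg)
  also have "\<dots> \<le> w a" by (rule super[OF Suc.prems])
  finally show ?case .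
qed

lemma mat_pow_cmult:
  "mat_pow S (\<lambda>x y. r * M x y) n a b = r ^ n * mat_pow S M n a b"
  by (induction n arbitrary: a) (simp_all add: sum_distrib_left algebra_simps)

lemma mat_pow_diag_add:
  assumes "finite S" "a \<in> S"
  shows "mat_pow S (\<lambda>x y. (if x = y then \<alpha> else 0) + Q x y) n a b =
     (\<Sum>k\<le>n. real (n choose k) * \<alpha> ^ (n - k) * mat_pow S Q k a b)"
  using assms(2)
proof (induction n arbitrary: a)
  case 0 then show ?case by simp
next
  case (Suc n)
  let ?D = "\<lambda>x y. (if x = y then \<alpha> else 0) + Q x y"
  define f where "f k = real (n choose k) * \<alpha> ^ (n - k) * mat_pow S Q k a b" for k
  define g where "g k = real (n choose k) * \<alpha> ^ (n - k) * mat_pow S Q (Suc k) a b" for k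
  have "(\<Sum>y\<in>S. Q a y * (\<Sum>k\<le>n. real (n choose k) * \<alpha> ^ (n - k) * mat_pow S Q k y b))
      = (\<Sum>k\<le>n. \<Sum>y\<in>S. real (n choose k) * \<alpha> ^ (n - k) * (Q a y * mat_pow S Q k y b))"
    unfolding sum_distrib_left by (subst sum.swap) (intro sum.cong refl, simp add: algebra_simps)
  also have "\<dots> = (\<Sum>k\<le>n. g k)"
    unfolding g_def by (intro sum.cong refl) (simp add: sum_distrib_left[symmetric])
  finally have Q_part: "(\<Sum>y\<in>S. Q a y * (\<Sum>k\<le>n. real (n choose k) * \<alpha> ^ (n - k) * mat_pow S Q k y b))
      = (\<Sum>k\<le>n. g k)" .
  have "mat_pow S ?D (Suc n) a b
     = (\<Sum>y\<in>S. (if a = y then \<alpha> else 0) * mat_pow S ?D n y b) + (\<Sum>y\<in>S. Q a y * mat_pow S ?D n y b)"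
    by (simp add: distrib_right sum.distrib)
  also have "\<dots> = \<alpha> * (\<Sum>k\<le>n. f k) + (\<Sum>k\<le>n. g k)"
    using Suc assms(1) Q_part by (simp add: f_def)
  finally have lhs: "mat_pow S ?D (Suc n) a b = \<alpha> * (\<Sum>k\<le>n. f k) + (\<Sum>k\<le>n. g k)" .
  define F where "F k = real (Suc n choose k) * \<alpha> ^ (Suc n - k) * mat_pow S Q k a b" for k
  define h where "h k = real (n choose Suc k) * \<alpha> ^ (n - k) * mat_pow S Q (Suc k) a b" for k
  \<comment> \<open>Pascal's rule splits the right-hand side into the same two sums.\<close>
  have "(\<Sum>k\<le>Suc n. F k) = F 0 + (\<Sum>k\<le>n. F (Suc k))" by (rule sum.atMost_Suc_shift)
  also have "(\<Sum>k\<le>n. F (Suc k)) = (\<Sum>k\<le>n. g k) + (\<Sum>k\<le>n. h k)"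
    unfolding sum.distrib[symmetric] by (intro sum.cong refl) (simp add: F_def g_def h_def algebra_simps)
  also have "F 0 + ((\<Sum>k\<le>n. g k) + (\<Sum>k\<le>n. h k)) = (\<Sum>k\<le>n. g k) + (F 0 + (\<Sum>k\<le>n. h k))"
    by simp
  also have "F 0 + (\<Sum>k\<le>n. h k) = (\<Sum>k\<le>Suc n. real (n choose k) * \<alpha> ^ (Suc n - k) * mat_pow S Q k a b)"
    by (subst sum.atMost_Suc_shift) (simp add: F_def h_def)
  also have "\<dots> = (\<Sum>k\<le>n. real (n choose k) * \<alpha> ^ (Suc n - k) * mat_pow S Q k a b)"
    by simp
  also have "\<dots> = \<alpha> * (\<Sum>k\<le>n. f k)"
    unfolding f_def sum_distrib_left by (intro sum.cong refl) (simp add: Suc_diff_le)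
  finally show ?case unfolding lhs F_def by simp
qed

lemma sums_exp_real: "(\<lambda>n. x ^ n / fact n) sums exp (x::real)"
  using exp_converges[of x] by (simp add: divide_inverse mult.commute)

lemma summable_abs_exp_series: "summable (\<lambda>n. \<bar>(x::real) ^ n / fact n\<bar>)"
proof -
  have "summable (\<lambda>n. \<bar>x\<bar> ^ n / fact n)" using sums_exp_real[of "\<bar>x\<bar>"] by (rule sums_summable)
  then show ?thesis by (simp add: power_abs)
qed

lemma mat_pow_uniformized_coeff:
  assumes S: "finite S" "a \<in> S" and c: "c > 0"
  shows "(c * t) ^ n / fact n * mat_pow S (\<lambda>x y. (if x = y then 1 else 0) + Q x y / c) n a b
      = (\<Sum>i\<le>n. t ^ i / fact i * mat_pow S Q i a b * ((c * t) ^ (n - i) / fact (n - i)))"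
proof -
  have P: "(\<lambda>x y. (if x = y then 1 else 0) + Q x y / c)
      = (\<lambda>x y. (1/c) * ((if x = y then c else 0) + Q x y))"
    using c by (auto simp: fun_eq_iff field_simps)
  have "(c * t) ^ n / fact n * mat_pow S (\<lambda>x y. (if x = y then 1 else 0) + Q x y / c) n a b
     = t ^ n / fact n * mat_pow S (\<lambda>x y. (if x = y then c else 0) + Q x y) n a b"
  proof -
    have "(c * t) ^ n * (1 / c) ^ n = t ^ n" using c by (simp add: power_mult_distrib[symmetric])
    then show ?thesis unfolding P mat_pow_cmult using c by (simp add: field_simps)
  qed
  also have "\<dots> = (\<Sum>i\<le>n. t ^ n / fact n * (real (n choose i) * c ^ (n - i) * mat_pow S Q i a b))"
    unfolding mat_pow_diag_add[OF S] sum_distrib_left ..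
  also have "\<dots> = (\<Sum>i\<le>n. t ^ i / fact i * mat_pow S Q i a b * ((c * t) ^ (n - i) / fact (n - i)))"
  proof (intro sum.cong refl)
    fix i assume "i \<in> {..n}"
    then have i: "i \<le> n" by simp
    have "(fact n :: real) = of_nat (fact i * fact (n - i) * (n choose i))"
      by (simp only: binomial_fact_lemma[OF i] of_nat_fact)
    then have f: "(fact n :: real) = real (n choose i) * fact i * fact (n - i)" by simp
    have tn: "t ^ n = t ^ i * t ^ (n - i)" using i by (simp add: power_add[symmetric])
    show "t ^ n / fact n * (real (n choose i) * c ^ (n - i) * mat_pow S Q i a b)
        = t ^ i / fact i * mat_pow S Q i a b * ((c * t) ^ (n - i) / fact (n - i))"
      unfolding f tn using i by (simp add: power_mult_distrib)
  qed
  finally show ?thesis .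
qed

text \<open>Uniformization, proved as the Cauchy product of the series of \<open>e^{ct}\<close> and \<open>e^{tQ}\<close>.\<close>

lemma mat_exp_uniformization:
  assumes S: "finite S" "a \<in> S" and c: "c > 0" and B: "\<And>a b. \<bar>Q a b\<bar> \<le> B"
  shows "mat_exp S Q t a b = exp (- (c * t)) *
     (\<Sum>n. (c * t) ^ n / fact n * mat_pow S (\<lambda>x y. (if x = y then 1 else 0) + Q x y / c) n a b)"
proof -
  define A where "A k = t ^ k / fact k * mat_pow S Q k a b" for k
  define C where "C j = (c * t) ^ j / fact j" for j
  have sA: "summable (\<lambda>k. norm (A k))"
    unfolding A_def real_norm_def by (rule summable_abs_mat_exp_series[OF S(1) B])
  have sC: "summable (\<lambda>k. norm (C k))" unfolding C_def real_norm_def by (rule summable_abs_exp_series)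
  have eC: "(\<Sum>k. C k) = exp (c * t)"
    unfolding C_def using sums_exp_real by (rule sums_unique[symmetric])
  have "mat_exp S Q t a b * exp (c * t) = (\<Sum>k. A k) * (\<Sum>k. C k)"
    unfolding mat_exp_def A_def eC ..
  also have "\<dots> = (\<Sum>n. \<Sum>i\<le>n. A i * C (n - i))" by (rule Cauchy_product[OF sA sC])
  also have "\<dots> = (\<Sum>n. (c * t) ^ n / fact n * mat_pow S (\<lambda>x y. (if x = y then 1 else 0) + Q x y / c) n a b)"
    unfolding A_def C_def mat_pow_uniformized_coeff[OF S c] ..
  finally show ?thesis by (simp add: exp_minus field_simps)
qed

lemma mat_pow_lumpable:
  assumes fin: "finite S'"
    and lump: "\<And>\<eta> F. \<eta> \<in> S' \<Longrightarrow> (\<Sum>\<zeta>\<in>S'. Q' \<eta> \<zeta> * F (r \<zeta>)) = (\<Sum>\<zeta>\<in>S. Q (r \<eta>) \<zeta> * F \<zeta>)"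
    and eta: "\<eta> \<in> S'"
  shows "(\<Sum>\<sigma>'\<in>S'. if r \<sigma>' = \<sigma> then mat_pow S' Q' n \<eta> \<sigma>' else 0) = mat_pow S Q n (r \<eta>) \<sigma>"
  using eta
proof (induction n arbitrary: \<eta>)
  case 0
  have "(\<Sum>\<sigma>'\<in>S'. if r \<sigma>' = \<sigma> then mat_pow S' Q' 0 \<eta> \<sigma>' else 0)
      = (\<Sum>\<sigma>'\<in>S'. if \<eta> = \<sigma>' then (if r \<eta> = \<sigma> then 1 else 0) else 0)"
    by (intro sum.cong refl) auto
  also have "\<dots> = (if r \<eta> = \<sigma> then 1 else 0)" using 0 fin by simp
  finally show ?case by simp
next
  case (Suc n)
  have "(\<Sum>\<sigma>'\<in>S'. if r \<sigma>' = \<sigma> then mat_pow S' Q' (Suc n) \<eta> \<sigma>' else 0)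
      = (\<Sum>\<zeta>\<in>S'. \<Sum>\<sigma>'\<in>S'. Q' \<eta> \<zeta> * (if r \<sigma>' = \<sigma> then mat_pow S' Q' n \<zeta> \<sigma>' else 0))"
    by (subst sum.swap) (intro sum.cong refl, simp add: sum_distrib_left)
  also have "\<dots> = (\<Sum>\<zeta>\<in>S'. Q' \<eta> \<zeta> * mat_pow S Q n (r \<zeta>) \<sigma>)"
    by (intro sum.cong refl) (simp add: sum_distrib_left[symmetric] Suc.IH)
  also have "\<dots> = (\<Sum>\<zeta>\<in>S. Q (r \<eta>) \<zeta> * mat_pow S Q n \<zeta> \<sigma>)"
    by (rule lump[OF Suc.prems])
  finally show ?case by simp
qed

lemma mat_exp_lumpable:
  assumes fin: "finite S'"
    and lump: "\<And>\<eta> F. \<eta> \<in> S' \<Longrightarrow> (\<Sum>\<zeta>\<in>S'. Q' \<eta> \<zeta> * F (r \<zeta>)) = (\<Sum>\<zeta>\<in>S. Q (r \<eta>) \<zeta> * F \<zeta>)"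
    and eta: "\<eta> \<in> S'" and B: "\<And>a b. \<bar>Q' a b\<bar> \<le> B"
  shows "(\<Sum>\<sigma>'\<in>S'. if r \<sigma>' = \<sigma> then mat_exp S' Q' t \<eta> \<sigma>' else 0) = mat_exp S Q t (r \<eta>) \<sigma>"
proof -
  have sm: "summable (\<lambda>n. if r \<sigma>' = \<sigma> then t ^ n / fact n * mat_pow S' Q' n \<eta> \<sigma>' else 0)" for \<sigma>'
    using summable_mat_exp_series[OF fin B, where t=t and a=\<eta> and b=\<sigma>'] by (cases "r \<sigma>' = \<sigma>") simp_all
  have "(\<Sum>\<sigma>'\<in>S'. if r \<sigma>' = \<sigma> then mat_exp S' Q' t \<eta> \<sigma>' else 0)
      = (\<Sum>\<sigma>'\<in>S'. \<Sum>n. if r \<sigma>' = \<sigma> then t ^ n / fact n * mat_pow S' Q' n \<eta> \<sigma>' else 0)"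
    unfolding mat_exp_def by (intro sum.cong refl) auto
  also have "\<dots> = (\<Sum>n. \<Sum>\<sigma>'\<in>S'. if r \<sigma>' = \<sigma> then t ^ n / fact n * mat_pow S' Q' n \<eta> \<sigma>' else 0)"
    by (rule suminf_sum[symmetric]) (rule sm)
  also have "\<dots> = (\<Sum>n. t ^ n / fact n * mat_pow S Q n (r \<eta>) \<sigma>)"
  proof (intro suminf_cong)
    fix n
    have "(\<Sum>\<sigma>'\<in>S'. if r \<sigma>' = \<sigma> then t ^ n / fact n * mat_pow S' Q' n \<eta> \<sigma>' else 0)
       = t ^ n / fact n * (\<Sum>\<sigma>'\<in>S'. if r \<sigma>' = \<sigma> then mat_pow S' Q' n \<eta> \<sigma>' else 0)"
      unfolding sum_distrib_left by (intro sum.cong refl) auto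
    then show "(\<Sum>\<sigma>'\<in>S'. if r \<sigma>' = \<sigma> then t ^ n / fact n * mat_pow S' Q' n \<eta> \<sigma>' else 0)
       = t ^ n / fact n * mat_pow S Q n (r \<eta>) \<sigma>"
      using mat_pow_lumpable[where Q'=Q' and r=r and Q=Q, OF fin lump eta] by simp
  qed
  finally show ?thesis unfolding mat_exp_def .
qed

lemma doeblin_contraction:
  fixes K :: "'a \<Rightarrow> 'a \<Rightarrow> real"
  assumes fin: "finite S" and s0: "s0 \<in> S"
    and K_nonneg: "\<And>z s. z \<in> S \<Longrightarrow> s \<in> S \<Longrightarrow> 0 \<le> K z s"
    and K_row: "\<And>z. z \<in> S \<Longrightarrow> (\<Sum>s\<in>S. K z s) = 1"
    and K_s0: "\<And>z. z \<in> S \<Longrightarrow> \<delta> \<le> K z s0"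
    and v: "(\<Sum>z\<in>S. v z) = 0"
  shows "(\<Sum>s\<in>S. \<bar>\<Sum>z\<in>S. v z * K z s\<bar>) \<le> (1 - \<delta>) * (\<Sum>z\<in>S. \<bar>v z\<bar>)"
proof -
  define K' where "K' z s = K z s - (if s = s0 then \<delta> else 0)" for z s
  have K'_nonneg: "z \<in> S \<Longrightarrow> s \<in> S \<Longrightarrow> 0 \<le> K' z s" for z s using K_nonneg K_s0 by (auto simp: K'_def)
  have K'_row: "z \<in> S \<Longrightarrow> (\<Sum>s\<in>S. K' z s) = 1 - \<delta>" for z
    using K_row fin s0 by (simp add: K'_def sum_subtractf)
  have eq: "(\<Sum>z\<in>S. v z * K z s) = (\<Sum>z\<in>S. v z * K' z s)" for s
  proof -
    have "(\<Sum>z\<in>S. v z * K z s) = (\<Sum>z\<in>S. v z * K' z s + (if s = s0 then \<delta> else 0) * v z)"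
      by (intro sum.cong refl) (simp add: K'_def algebra_simps)
    also have "\<dots> = (\<Sum>z\<in>S. v z * K' z s) + (if s = s0 then \<delta> else 0) * (\<Sum>z\<in>S. v z)"
      by (simp add: sum.distrib sum_distrib_left)
    finally have "(\<Sum>z\<in>S. v z * K z s)
        = (\<Sum>z\<in>S. v z * K' z s) + (if s = s0 then \<delta> else 0) * (\<Sum>z\<in>S. v z)" .
    then show ?thesis using v by simp
  qed
  have "(\<Sum>s\<in>S. \<bar>\<Sum>z\<in>S. v z * K z s\<bar>) \<le> (\<Sum>s\<in>S. \<Sum>z\<in>S. \<bar>v z\<bar> * K' z s)"
    unfolding eq
  proof (rule sum_mono)
    fix s assume s: "s \<in> S"
    have "\<bar>\<Sum>z\<in>S. v z * K' z s\<bar> \<le> (\<Sum>z\<in>S. \<bar>v z * K' z s\<bar>)" by (rule sum_abs)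
    also have "\<dots> = (\<Sum>z\<in>S. \<bar>v z\<bar> * K' z s)"
      using K'_nonneg s by (intro sum.cong refl) (simp add: abs_mult)
    finally show "\<bar>\<Sum>z\<in>S. v z * K' z s\<bar> \<le> (\<Sum>z\<in>S. \<bar>v z\<bar> * K' z s)" .
  qed
  also have "\<dots> = (\<Sum>z\<in>S. \<Sum>s\<in>S. \<bar>v z\<bar> * K' z s)" by (rule sum.swap)
  also have "\<dots> = (\<Sum>z\<in>S. \<bar>v z\<bar> * (1 - \<delta>))"
    by (intro sum.cong refl) (simp add: sum_distrib_left[symmetric] K'_row)
  finally show ?thesis by (simp add: sum_distrib_left mult.commute)
qed

lemma power_div_le_powr_root:
  fixes \<theta> :: real
  assumes "0 < \<theta>" "\<theta> \<le> 1" and "1 \<le> L"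
  shows "\<theta> ^ (n div L) \<le> (\<theta> powr (1 / real L)) ^ n / \<theta>"
proof -
  have "n mod L < L" using assms(3) by simp
  then have "n < n div L * L + L" using div_mult_mod_eq[of n L] by linarith
  then have "n < (n div L + 1) * L" by (simp add: algebra_simps)
  then have "real n < real ((n div L + 1) * L)" by (simp only: of_nat_less_iff)
  then have "real n < (real (n div L) + 1) * real L" by (simp add: algebra_simps)
  then have nl: "real n / real L - 1 \<le> real (n div L)" using assms(3) by (simp add: field_simps)
  have "\<theta> ^ (n div L) = \<theta> powr real (n div L)" using assms by (simp add: powr_realpow)
  also have "\<dots> \<le> \<theta> powr (real n / real L - 1)" by (rule powr_mono'[OF nl]) (use assms in auto)
  also have "\<dots> = (\<theta> powr (1 / real L)) ^ n / \<theta>"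
    using assms by (simp add: powr_diff powr_powr powr_realpow[symmetric] mult.commute)
  finally show ?thesis .
qed

lemma summable_power_div_bound:
  fixes \<theta> :: real
  assumes \<theta>: "0 < \<theta>" "\<theta> < 1" and L: "1 \<le> L" and a: "\<And>n. 0 \<le> a n" "\<And>n. a n \<le> \<theta> ^ (n div L)"
  shows "summable a"
proof (rule summable_comparison_test')
  define \<rho> where "\<rho> = \<theta> powr (1 / real L)"
  have "\<rho> < 1 powr (1 / real L)" unfolding \<rho>_def by (rule powr_less_mono2) (use \<theta> L in auto)
  then show "summable (\<lambda>n. \<rho> ^ n / \<theta>)"
    using \<theta> by (intro summable_divide summable_geometric) (simp add: \<rho>_def)
  show "norm (a n) \<le> \<rho> ^ n / \<theta>" for n
    using a[of n] power_div_le_powr_root[of \<theta> L n] \<theta> L by (simp add: \<rho>_def)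
qed

lemma summable_exp_series_mult:
  fixes R :: "nat \<Rightarrow> real"
  assumes R: "\<And>n. 0 \<le> R n" "summable R"
  shows "summable (\<lambda>n. x ^ n / fact n * R n)"
proof (rule summable_comparison_test'[OF summable_mult2[OF summable_abs_exp_series]])
  fix n
  have "R n \<le> suminf R" using sum_le_suminf[OF R(2), of "{n}"] R(1) by simp
  then show "norm (x ^ n / fact n * R n) \<le> \<bar>x ^ n / fact n\<bar> * suminf R"
    using R(1)[of n] by (simp add: abs_mult mult_left_mono divide_right_mono)
qed

text \<open>Each Poisson weight \<open>e^{-ct} (ct)^n / n!\<close> integrates to \<open>1/c\<close> over \<open>t \<ge> 0\<close>, being an
  Erlang density divided by \<open>c\<close>.\<close>

lemma has_integral_poisson_mixture:
  fixes c :: real and R :: "nat \<Rightarrow> real"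
  assumes c: "0 < c" and R: "\<And>n. 0 \<le> R n" "summable R"
  shows "((\<lambda>t. exp (- (c * t)) * (\<Sum>n. (c * t) ^ n / fact n * R n)) has_integral (\<Sum>n. R n) / c) {0..}"
proof -
  define g where "g n t = indicator {0..} t * (exp (- (c * t)) * ((c * t) ^ n / fact n * R n))"
    for n and t :: real
  define F where "F t = (if t \<in> {0..} then exp (- (c * t)) * (\<Sum>n. (c * t) ^ n / fact n * R n) else 0)"
    for t :: real
  have g_nonneg: "0 \<le> g n t" for n t using c R by (simp add: g_def indicator_def)
  have sums: "(\<lambda>n. g n t) sums F t" for t
  proof (cases "t \<in> {0..}")
    case True
    show ?thesis
      using sums_mult[OF summable_sums[OF summable_exp_series_mult[OF R]], of "exp (- (c * t))"] True
      by (simp add: g_def F_def)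
  next
    case False then show ?thesis by (simp add: g_def F_def)
  qed
  have F_eq: "F = (\<lambda>t. \<Sum>n. g n t)" using sums by (simp add: fun_eq_iff sums_unique)
  have [measurable]: "g n \<in> borel_measurable borel" for n unfolding g_def[abs_def] by measurable
  have F_meas: "F \<in> borel_measurable borel" unfolding F_eq by measurable
  have F_nonneg: "0 \<le> F t" for t
    unfolding F_eq by (rule suminf_nonneg[OF sums_summable[OF sums] g_nonneg])
  have int_g: "(\<integral>\<^sup>+ t. ennreal (g n t) \<partial>lborel) = ennreal (R n / c)" for n
  proof -
    have "(\<integral>\<^sup>+ t. ennreal (g n t) \<partial>lborel)
        = (\<integral>\<^sup>+ t. ennreal (erlang_density n c t) * ennreal (R n / c) \<partial>lborel)"
      using c R by (intro nn_integral_cong)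
        (simp add: g_def erlang_density_def indicator_def ennreal_mult[symmetric] field_simps)
    also have "\<dots> = ennreal (R n / c)"
      using nn_integral_erlang_ith_moment[OF c, of n 0] by (simp add: nn_integral_multc)
    finally show ?thesis .
  qed
  have "(\<integral>\<^sup>+ t. ennreal (F t) \<partial>lborel) = (\<integral>\<^sup>+ t. (\<Sum>n. ennreal (g n t)) \<partial>lborel)"
    by (intro nn_integral_cong)
       (use suminf_ennreal2[OF g_nonneg sums_summable[OF sums]] sums_unique[OF sums] in simp)
  also have "\<dots> = (\<Sum>n. \<integral>\<^sup>+ t. ennreal (g n t) \<partial>lborel)" by (rule nn_integral_suminf) measurable
  also have "\<dots> = ennreal (\<Sum>n. R n / c)"
    unfolding int_g by (rule suminf_ennreal2) (use c R summable_divide in auto)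
  also have "(\<Sum>n. R n / c) = (\<Sum>n. R n) / c" by (rule suminf_divide[OF R(2)])
  finally have "(\<integral>\<^sup>+ t. ennreal (F t) \<partial>lborel) = ennreal ((\<Sum>n. R n) / c)" .
  then have "(F has_integral (\<Sum>n. R n) / c) UNIV"
    by (rule nn_integral_has_integral[OF F_meas F_nonneg])
       (use c suminf_nonneg[OF R(2) R(1)] in simp)
  then show ?thesis unfolding F_def[abs_def] has_integral_restrict_UNIV .
qed

section \<open>Elementary properties of the East process\<close>

lemma finite_east_states: "finite (east_states L)"
proof (rule finite_subset)
  show "east_states L \<subseteq> (\<lambda>A x. x \<in> A) ` Pow {1..L}"
  proof
    fix \<sigma> assume "\<sigma> \<in> east_states L"
    then have "{x. \<sigma> x} \<in> Pow {1..L}" "\<sigma> = (\<lambda>x. x \<in> {x. \<sigma> x})" by (auto simp: east_states_def)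
    then show "\<sigma> \<in> (\<lambda>A x. x \<in> A) ` Pow {1..L}" by blast
  qed
qed auto

lemma east_states_mono: "L \<le> L' \<Longrightarrow> east_states L \<subseteq> east_states L'"
  by (auto simp: east_states_def)

lemma fun_upd_in_east_states: "\<sigma> \<in> east_states L \<Longrightarrow> x \<in> {1..L} \<Longrightarrow> \<sigma>(x := b) \<in> east_states L"
  by (auto simp: east_states_def)

lemma fun_upd_False_in_east_states: "\<sigma> \<in> east_states L \<Longrightarrow> \<sigma>(x := False) \<in> east_states L"
  by (auto simp: east_states_def)

lemma east_c_cases: "east_c \<sigma> x = 0 \<or> east_c \<sigma> x = 1"
  by (simp add: east_c_def)

lemma east_c_nonneg: "0 \<le> east_c \<sigma> x"
  by (auto simp: east_c_def)

lemma east_rate_eq: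
  "east_rate q L \<eta> \<zeta> = (\<Sum>x\<in>{1..L}. east_c \<eta> x *
      ((1 - q) * (if \<eta>(x := True) = \<zeta> then 1 else 0) + q * (if \<eta>(x := False) = \<zeta> then 1 else 0)
        - (if \<eta> = \<zeta> then 1 else 0)))"
  by (simp add: east_rate_def east_gen_def)

lemma east_gen_eq_rate_sum:
  assumes "\<eta> \<in> east_states L"
  shows "east_gen q L f \<eta> = (\<Sum>\<zeta>\<in>east_states L. east_rate q L \<eta> \<zeta> * f \<zeta>)"
proof -
  let ?S = "east_states L"
  let ?\<delta> = "\<lambda>\<sigma> \<zeta>. if \<sigma> = \<zeta> then 1 else (0::real)"
  have pick: "(\<Sum>\<zeta>\<in>?S. ?\<delta> \<sigma> \<zeta> * f \<zeta>) = f \<sigma>" if "\<sigma> \<in> ?S" for \<sigma>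
    using that finite_east_states by simp
  have "(\<Sum>\<zeta>\<in>?S. east_rate q L \<eta> \<zeta> * f \<zeta>) = (\<Sum>x\<in>{1..L}. \<Sum>\<zeta>\<in>?S. east_c \<eta> x *
      ((1 - q) * (?\<delta> (\<eta>(x := True)) \<zeta> * f \<zeta>) + q * (?\<delta> (\<eta>(x := False)) \<zeta> * f \<zeta>) - ?\<delta> \<eta> \<zeta> * f \<zeta>))"
    unfolding east_rate_eq sum_distrib_right
    by (subst sum.swap) (intro sum.cong refl, simp add: algebra_simps)
  also have "\<dots> = (\<Sum>x\<in>{1..L}. east_c \<eta> x * ((1 - q) * f (\<eta>(x := True)) + q * f (\<eta>(x := False)) - f \<eta>))"
  proof (intro sum.cong refl)
    fix x assume x: "x \<in> {1..L}"
    have "(\<Sum>\<zeta>\<in>?S. east_c \<eta> x *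
        ((1 - q) * (?\<delta> (\<eta>(x := True)) \<zeta> * f \<zeta>) + q * (?\<delta> (\<eta>(x := False)) \<zeta> * f \<zeta>) - ?\<delta> \<eta> \<zeta> * f \<zeta>))
      = east_c \<eta> x * ((1 - q) * (\<Sum>\<zeta>\<in>?S. ?\<delta> (\<eta>(x := True)) \<zeta> * f \<zeta>)
          + q * (\<Sum>\<zeta>\<in>?S. ?\<delta> (\<eta>(x := False)) \<zeta> * f \<zeta>) - (\<Sum>\<zeta>\<in>?S. ?\<delta> \<eta> \<zeta> * f \<zeta>))"
      by (simp add: sum_distrib_left sum.distrib sum_subtractf algebra_simps)
    then show "(\<Sum>\<zeta>\<in>?S. east_c \<eta> x *
        ((1 - q) * (?\<delta> (\<eta>(x := True)) \<zeta> * f \<zeta>) + q * (?\<delta> (\<eta>(x := False)) \<zeta> * f \<zeta>) - ?\<delta> \<eta> \<zeta> * f \<zeta>))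
      = east_c \<eta> x * ((1 - q) * f (\<eta>(x := True)) + q * f (\<eta>(x := False)) - f \<eta>)"
      by (simp only: pick assms fun_upd_in_east_states[OF assms x])
  qed
  finally show ?thesis unfolding east_gen_def by simp
qed

lemma east_gen_const: "east_gen q L (\<lambda>_. k) \<eta> = 0"
  by (simp add: east_gen_def algebra_simps)

lemma east_rate_row_sum: "\<eta> \<in> east_states L \<Longrightarrow> (\<Sum>\<zeta>\<in>east_states L. east_rate q L \<eta> \<zeta>) = 0"
  using east_gen_eq_rate_sum[of \<eta> L q "\<lambda>_. 1"] east_gen_const[of q L 1 \<eta>] by simp

lemma east_rate_abs_le:
  assumes "0 \<le> q" "q \<le> 1"
  shows "\<bar>east_rate q L \<eta> \<zeta>\<bar> \<le> real L"
proof -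
  have "\<bar>east_c \<eta> x * ((1 - q) * (if a then 1 else 0) + q * (if b then 1 else 0) - (if d then 1 else 0))\<bar>
      \<le> (1::real)" for x a b d
    using assms east_c_cases[of \<eta> x] by auto
  then have "\<bar>east_rate q L \<eta> \<zeta>\<bar> \<le> (\<Sum>x\<in>{1..L}. (1::real))"
    unfolding east_rate_eq by (intro order_trans[OF sum_abs sum_mono])
  then show ?thesis by simp
qed

lemma east_rate_nonneg:
  assumes "0 \<le> q" "q \<le> 1" "\<eta> \<noteq> \<zeta>"
  shows "0 \<le> east_rate q L \<eta> \<zeta>"
  unfolding east_rate_eq using assms by (intro sum_nonneg) (simp add: east_c_nonneg)

lemma east_rate_diag_ge:
  assumes "0 \<le> q" "q \<le> 1"
  shows "- real L \<le> east_rate q L \<eta> \<eta>"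
  using east_rate_abs_le[OF assms, of L \<eta> \<eta>] by linarith

lemma east_rate_fun_upd_ge:
  assumes "0 \<le> q" "q \<le> 1" "x \<in> {1..L}" "\<eta>(x := b) \<noteq> \<eta>"
  shows "east_c \<eta> x * (if b then 1 - q else q) \<le> east_rate q L \<eta> (\<eta>(x := b))"
proof -
  let ?g = "\<lambda>y. east_c \<eta> y * ((1 - q) * (if \<eta>(y := True) = \<eta>(x := b) then 1 else 0)
      + q * (if \<eta>(y := False) = \<eta>(x := b) then 1 else 0) - (if \<eta> = \<eta>(x := b) then 1 else 0))"
  have "?g x \<le> (\<Sum>y\<in>{1..L}. ?g y)"
    using assms by (intro member_le_sum) (auto intro!: mult_nonneg_nonneg east_c_nonneg)
  moreover have "?g x = east_c \<eta> x * (if b then 1 - q else q)"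
  proof -
    have ne: "\<eta>(x := True) \<noteq> \<eta>(x := False)" "\<eta>(x := False) \<noteq> \<eta>(x := True)" by (metis fun_upd_same)+
    have ne2: "\<eta> \<noteq> \<eta>(x := b)" using assms(4) by metis
    show ?thesis using ne ne2 by (cases b) auto
  qed
  ultimately show ?thesis unfolding east_rate_eq by simp
qed

definition east_restrict :: "nat \<Rightarrow> (nat \<Rightarrow> bool) \<Rightarrow> (nat \<Rightarrow> bool)" where
  "east_restrict L \<sigma> = (\<lambda>x. \<sigma> x \<and> x \<le> L)"

lemma east_restrict_in_east_states: "\<sigma> \<in> east_states L' \<Longrightarrow> east_restrict L \<sigma> \<in> east_states L"
  by (auto simp: east_restrict_def east_states_def)

lemma east_restrict_id: "\<sigma> \<in> east_states L \<Longrightarrow> east_restrict L \<sigma> = \<sigma>"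
  by (auto simp: east_restrict_def east_states_def fun_eq_iff)

lemma east_c_east_restrict: "x \<le> L \<Longrightarrow> east_c (east_restrict L \<eta>) x = east_c \<eta> x"
  by (auto simp: east_c_def east_restrict_def)

text \<open>The key point of the monotonicity argument: a constraint only looks at the left
  neighbour, so the sites beyond \<open>L\<close> do not influence the sites up to \<open>L\<close>.\<close>

lemma east_gen_east_restrict:
  assumes "L \<le> L'"
  shows "east_gen q L' (\<lambda>\<zeta>. F (east_restrict L \<zeta>)) \<eta> = east_gen q L F (east_restrict L \<eta>)"
proof -
  let ?F = "\<lambda>\<zeta>. F (east_restrict L \<zeta>)"
  have outside: "east_restrict L (\<eta>(x := b)) = east_restrict L \<eta>" if "L < x" for x b
    using that by (auto simp: east_restrict_def fun_eq_iff)
  have inside: "east_restrict L (\<eta>(x := b)) = (east_restrict L \<eta>)(x := b)" if "x \<le> L" for x b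
    using that by (auto simp: east_restrict_def fun_eq_iff)
  have "east_gen q L' ?F \<eta>
      = (\<Sum>x\<in>{1..L}. east_c \<eta> x * ((1 - q) * ?F (\<eta>(x := True)) + q * ?F (\<eta>(x := False)) - ?F \<eta>))"
    unfolding east_gen_def using assms by (intro sum.mono_neutral_right) (auto simp: outside algebra_simps)
  also have "\<dots> = east_gen q L F (east_restrict L \<eta>)"
    unfolding east_gen_def by (intro sum.cong refl) (simp add: inside east_c_east_restrict)
  finally show ?thesis .
qed

lemma sum_east_states_by_site:
  assumes x: "x \<in> {1..L}"
  shows "(\<Sum>\<eta>\<in>east_states L. G \<eta>) = (\<Sum>\<eta>\<in>{\<eta>\<in>east_states L. \<not> \<eta> x}. G \<eta> + G (\<eta>(x := True)))"
proof -
  define A where "A = {\<eta>\<in>east_states L. \<not> \<eta> x}"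
  have fA: "finite A" unfolding A_def using finite_east_states by simp
  have eq: "east_states L = A \<union> (\<lambda>\<eta>. \<eta>(x := True)) ` A"
  proof
    show "east_states L \<subseteq> A \<union> (\<lambda>\<eta>. \<eta>(x := True)) ` A"
    proof
      fix \<eta> assume h: "\<eta> \<in> east_states L"
      show "\<eta> \<in> A \<union> (\<lambda>\<eta>. \<eta>(x := True)) ` A"
      proof (cases "\<eta> x")
        case True
        then have "\<eta> = (\<eta>(x := False))(x := True)" by (auto simp: fun_eq_iff)
        moreover have "\<eta>(x := False) \<in> A" using h fun_upd_False_in_east_states by (auto simp: A_def)
        ultimately show ?thesis by blast
      next
        case False then show ?thesis using h by (auto simp: A_def)
      qed
    qed
    show "A \<union> (\<lambda>\<eta>. \<eta>(x := True)) ` A \<subseteq> east_states L"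
      using fun_upd_in_east_states[OF _ x] by (auto simp: A_def)
  qed
  have disj: "A \<inter> (\<lambda>\<eta>. \<eta>(x := True)) ` A = {}" by (auto simp: A_def)
  have restore: "(a(x := True))(x := False) = a" if "a \<in> A" for a
    using that by (auto simp: A_def fun_eq_iff)
  have inj: "inj_on (\<lambda>\<eta>. \<eta>(x := True)) A"
  proof (rule inj_onI)
    fix a b assume "a \<in> A" "b \<in> A" "a(x := True) = b(x := True)"
    then show "a = b" using restore[of a] restore[of b] by simp
  qed
  have "(\<Sum>\<eta>\<in>east_states L. G \<eta>) = (\<Sum>\<eta>\<in>A. G \<eta>) + (\<Sum>\<eta>\<in>(\<lambda>\<eta>. \<eta>(x := True)) ` A. G \<eta>)"
    unfolding eq by (rule sum.union_disjoint) (use fA disj in auto)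
  also have "(\<Sum>\<eta>\<in>(\<lambda>\<eta>. \<eta>(x := True)) ` A. G \<eta>) = (\<Sum>\<eta>\<in>A. G (\<eta>(x := True)))"
    by (rule sum.reindex_cong[OF inj refl refl])
  finally show ?thesis unfolding A_def by (simp add: sum.distrib)
qed

definition site_weight :: "real \<Rightarrow> bool \<Rightarrow> real" where "site_weight q b = (if b then 1 - q else q)"

lemma east_pi_site_weight: "east_pi q L \<sigma> = (\<Prod>x\<in>{1..L}. site_weight q (\<sigma> x))"
  by (simp add: east_pi_def site_weight_def)

lemma east_pi_fun_upd:
  assumes "x \<in> {1..L}"
  shows "east_pi q L (\<eta>(x := b)) = (\<Prod>y\<in>{1..L} - {x}. site_weight q (\<eta> y)) * site_weight q b"
proof -
  have "east_pi q L (\<eta>(x := b)) = site_weight q b * (\<Prod>y\<in>{1..L} - {x}. site_weight q ((\<eta>(x := b)) y))"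
    unfolding east_pi_site_weight using assms by (simp add: prod.remove)
  also have "(\<Prod>y\<in>{1..L} - {x}. site_weight q ((\<eta>(x := b)) y)) = (\<Prod>y\<in>{1..L} - {x}. site_weight q (\<eta> y))"
    by (intro prod.cong) auto
  finally show ?thesis by (simp only: mult.commute)
qed

lemma east_pi_Suc: "east_pi q (Suc L) \<sigma> = east_pi q L \<sigma> * site_weight q (\<sigma> (Suc L))"
  unfolding east_pi_site_weight by (simp add: atLeastAtMostSuc_conv mult.commute)

lemma east_pi_fun_upd_outside: "y \<notin> {1..L} \<Longrightarrow> east_pi q L (\<sigma>(y := b)) = east_pi q L \<sigma>"
  unfolding east_pi_site_weight by (intro prod.cong) auto

lemma east_states_Suc_last_unset: "{\<eta>\<in>east_states (Suc L). \<not> \<eta> (Suc L)} = east_states L"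
  by (auto simp: east_states_def le_Suc_eq)

lemma sum_east_states_Suc:
  "(\<Sum>\<eta>\<in>east_states (Suc L). G \<eta>) = (\<Sum>\<eta>\<in>east_states L. G \<eta> + G (\<eta>(Suc L := True)))"
  using sum_east_states_by_site[of "Suc L" "Suc L" G] east_states_Suc_last_unset[of L] by simp

lemma east_states_outside: "\<eta> \<in> east_states L \<Longrightarrow> x \<notin> {1..L} \<Longrightarrow> \<not> \<eta> x"
  by (auto simp: east_states_def)

lemma east_pi_sum: "(\<Sum>\<eta>\<in>east_states L. east_pi q L \<eta>) = 1"
proof (induction L)
  case 0
  have "east_states 0 = {\<lambda>_. False}" by (auto simp: east_states_def fun_eq_iff)
  then show ?case by (simp add: east_pi_def)
next
  case (Suc L)
  have "(\<Sum>\<eta>\<in>east_states (Suc L). east_pi q (Suc L) \<eta>)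
      = (\<Sum>\<eta>\<in>east_states L. east_pi q L \<eta> * (site_weight q False + site_weight q True))"
    unfolding sum_east_states_Suc
  proof (intro sum.cong refl)
    fix \<eta> assume h: "\<eta> \<in> east_states L"
    have "\<not> \<eta> (Suc L)" using east_states_outside[OF h] by simp
    moreover have "east_pi q L (\<eta>(Suc L := True)) = east_pi q L \<eta>"
      by (rule east_pi_fun_upd_outside) simp
    ultimately show "east_pi q (Suc L) \<eta> + east_pi q (Suc L) (\<eta>(Suc L := True))
        = east_pi q L \<eta> * (site_weight q False + site_weight q True)"
      unfolding east_pi_Suc by (simp add: algebra_simps)
  qed
  also have "\<dots> = (\<Sum>\<eta>\<in>east_states L. east_pi q L \<eta>)" by (simp add: site_weight_def)
  also have "\<dots> = 1" by (rule Suc)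
  finally show ?case .
qed

lemma east_pi_nonneg: "0 \<le> q \<Longrightarrow> q \<le> 1 \<Longrightarrow> 0 \<le> east_pi q L \<sigma>"
  unfolding east_pi_def by (intro prod_nonneg) auto

lemma east_pi_marginal:
  assumes "L \<le> L'" "\<sigma> \<in> east_states L"
  shows "(\<Sum>\<sigma>'\<in>east_states L'. if east_restrict L \<sigma>' = \<sigma> then east_pi q L' \<sigma>' else 0) = east_pi q L \<sigma>"
  using assms(1)
proof (induction L' rule: dec_induct)
  case base
  have "(\<Sum>\<sigma>'\<in>east_states L. if east_restrict L \<sigma>' = \<sigma> then east_pi q L \<sigma>' else 0)
      = (\<Sum>\<sigma>'\<in>east_states L. if \<sigma>' = \<sigma> then east_pi q L \<sigma>' else 0)"
    by (intro sum.cong refl) (simp add: east_restrict_id)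
  then show ?case using assms(2) finite_east_states by simp
next
  case (step n)
  let ?f = "\<lambda>n \<sigma>'. if east_restrict L \<sigma>' = \<sigma> then east_pi q n \<sigma>' else 0"
  have "(\<Sum>\<sigma>'\<in>east_states (Suc n). ?f (Suc n) \<sigma>')
      = (\<Sum>\<sigma>'\<in>east_states n. ?f n \<sigma>' * (site_weight q False + site_weight q True))"
    unfolding sum_east_states_Suc
  proof (intro sum.cong refl)
    fix \<eta> assume h: "\<eta> \<in> east_states n"
    have "\<not> \<eta> (Suc n)" using east_states_outside[OF h] by simp
    moreover have "east_restrict L (\<eta>(Suc n := True)) = east_restrict L \<eta>"
      using step(1) by (auto simp: east_restrict_def fun_eq_iff)
    moreover have "east_pi q n (\<eta>(Suc n := True)) = east_pi q n \<eta>"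
      by (rule east_pi_fun_upd_outside) simp
    ultimately show "?f (Suc n) \<eta> + ?f (Suc n) (\<eta>(Suc n := True))
        = ?f n \<eta> * (site_weight q False + site_weight q True)"
      unfolding east_pi_Suc by (simp add: algebra_simps)
  qed
  also have "\<dots> = (\<Sum>\<sigma>'\<in>east_states n. ?f n \<sigma>')" by (simp add: site_weight_def)
  also have "\<dots> = east_pi q L \<sigma>" by (rule step(3))
  finally show ?case .
qed

text \<open>Reversibility: at a site \<open>x\<close> the contributions of \<open>\<eta>\<close> and \<open>\<eta>(x := True)\<close> cancel,
  as \<open>\<pi>(\<eta>(x := True)) q = \<pi>(\<eta>(x := False)) (1 - q)\<close> and both see the same constraint.\<close>

lemma east_pi_invariant:
  "(\<Sum>\<eta>\<in>east_states L. east_pi q L \<eta> * east_gen q L f \<eta>) = 0"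
proof -
  have "(\<Sum>\<eta>\<in>east_states L. east_pi q L \<eta> * east_gen q L f \<eta>)
    = (\<Sum>x\<in>{1..L}. \<Sum>\<eta>\<in>east_states L. east_pi q L \<eta> * (east_c \<eta> x *
      ((1 - q) * f (\<eta>(x := True)) + q * f (\<eta>(x := False)) - f \<eta>)))"
    unfolding east_gen_def sum_distrib_left by (rule sum.swap)
  also have "\<dots> = 0"
  proof (rule sum.neutral, rule ballI)
    fix x assume x: "x \<in> {1..L}"
    define G where "G \<eta> = east_pi q L \<eta> * (east_c \<eta> x *
      ((1 - q) * f (\<eta>(x := True)) + q * f (\<eta>(x := False)) - f \<eta>))" for \<eta>
    have "(\<Sum>\<eta>\<in>east_states L. G \<eta>) = 0"
      unfolding sum_east_states_by_site[OF x]
    proof (rule sum.neutral, rule ballI)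
      fix \<eta> assume "\<eta> \<in> {\<eta> \<in> east_states L. \<not> \<eta> x}"
      then have nx: "\<not> \<eta> x" by simp
      define p0 where "p0 = (\<Prod>y\<in>{1..L} - {x}. site_weight q (\<eta> y))"
      have e0: "\<eta>(x := False) = \<eta>" using nx by (simp add: fun_eq_iff)
      have pi0: "east_pi q L \<eta> = p0 * q"
        using east_pi_fun_upd[OF x, of q \<eta> False] e0 by (simp add: p0_def site_weight_def)
      have pi1: "east_pi q L (\<eta>(x := True)) = p0 * (1 - q)"
        using east_pi_fun_upd[OF x, of q \<eta> True] by (simp add: p0_def site_weight_def)
      have c1: "east_c (\<eta>(x := True)) x = east_c \<eta> x" using x by (auto simp: east_c_def)
      have e1: "(\<eta>(x := True))(x := False) = \<eta>" using e0 by simp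
      have e2: "(\<eta>(x := True))(x := True) = \<eta>(x := True)" by simp
      show "G \<eta> + G (\<eta>(x := True)) = 0"
        unfolding G_def pi0 pi1 c1 e1 e2 e0 by (simp add: algebra_simps)
    qed
    then show "(\<Sum>\<eta>\<in>east_states L. east_pi q L \<eta> * (east_c \<eta> x *
      ((1 - q) * f (\<eta>(x := True)) + q * f (\<eta>(x := False)) - f \<eta>))) = 0" unfolding G_def .
  qed
  finally show ?thesis .
qed

lemma east_rate_lumpable:
  assumes "L \<le> L'" "\<eta> \<in> east_states L'"
  shows "(\<Sum>\<zeta>\<in>east_states L'. east_rate q L' \<eta> \<zeta> * F (east_restrict L \<zeta>))
      = (\<Sum>\<zeta>\<in>east_states L. east_rate q L (east_restrict L \<eta>) \<zeta> * F \<zeta>)"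
  using east_gen_eq_rate_sum[OF assms(2), of q "\<lambda>\<zeta>. F (east_restrict L \<zeta>)"]
    east_gen_east_restrict[OF assms(1), of q F \<eta>]
    east_gen_eq_rate_sum[OF east_restrict_in_east_states[OF assms(2), of L], of q F]
  by simp

lemma east_heat_marginal:
  assumes "L \<le> L'" "\<eta> \<in> east_states L" "0 \<le> q" "q \<le> 1"
  shows "(\<Sum>\<sigma>'\<in>east_states L'. if east_restrict L \<sigma>' = \<sigma> then east_heat q L' t \<eta> \<sigma>' else 0)
      = east_heat q L t \<eta> \<sigma>"
proof -
  have eta': "\<eta> \<in> east_states L'" using assms(1,2) east_states_mono by blast
  have "(\<Sum>\<sigma>'\<in>east_states L'. if east_restrict L \<sigma>' = \<sigma> then east_heat q L' t \<eta> \<sigma>' else 0)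
      = mat_exp (east_states L) (east_rate q L) t (east_restrict L \<eta>) \<sigma>"
    unfolding east_heat_def
    by (rule mat_exp_lumpable[where B = "real L'"])
       (auto simp: finite_east_states eta' east_rate_lumpable[OF assms(1)] east_rate_abs_le[OF assms(3,4)])
  then show ?thesis using east_restrict_id[OF assms(2)] by (simp add: east_heat_def)
qed

lemma east_tv_mono:
  assumes "L \<le> L'" "\<eta> \<in> east_states L" "0 \<le> q" "q \<le> 1"
  shows "east_tv q L t \<eta> \<le> east_tv q L' t \<eta>"
proof -
  let ?S = "east_states L" and ?S' = "east_states L'"
  let ?d = "\<lambda>\<sigma>'. east_heat q L' t \<eta> \<sigma>' - east_pi q L' \<sigma>'"
  have img: "east_restrict L ` ?S' \<subseteq> ?S" by (auto intro: east_restrict_in_east_states)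
  have "(\<Sum>\<sigma>'\<in>?S'. \<bar>?d \<sigma>'\<bar>) = (\<Sum>\<sigma>\<in>?S. \<Sum>\<sigma>'\<in>{x\<in>?S'. east_restrict L x = \<sigma>}. \<bar>?d \<sigma>'\<bar>)"
    by (rule sum.group[OF finite_east_states finite_east_states img, symmetric])
  also have "\<dots> \<ge> (\<Sum>\<sigma>\<in>?S. \<bar>\<Sum>\<sigma>'\<in>{x\<in>?S'. east_restrict L x = \<sigma>}. ?d \<sigma>'\<bar>)"
    by (intro sum_mono sum_abs)
  also have "(\<Sum>\<sigma>\<in>?S. \<bar>\<Sum>\<sigma>'\<in>{x\<in>?S'. east_restrict L x = \<sigma>}. ?d \<sigma>'\<bar>)
      = (\<Sum>\<sigma>\<in>?S. \<bar>east_heat q L t \<eta> \<sigma> - east_pi q L \<sigma>\<bar>)"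
  proof (intro sum.cong refl)
    fix \<sigma> assume s: "\<sigma> \<in> ?S"
    have "(\<Sum>\<sigma>'\<in>{x\<in>?S'. east_restrict L x = \<sigma>}. ?d \<sigma>')
        = (\<Sum>\<sigma>'\<in>?S'. if east_restrict L \<sigma>' = \<sigma> then ?d \<sigma>' else 0)"
      by (rule sum.inter_filter[OF finite_east_states])
    also have "\<dots> = (\<Sum>\<sigma>'\<in>?S'. if east_restrict L \<sigma>' = \<sigma> then east_heat q L' t \<eta> \<sigma>' else 0)
        - (\<Sum>\<sigma>'\<in>?S'. if east_restrict L \<sigma>' = \<sigma> then east_pi q L' \<sigma>' else 0)"
      by (simp add: sum_subtractf[symmetric] if_distrib cong: if_cong)
    also have "\<dots> = east_heat q L t \<eta> \<sigma> - east_pi q L \<sigma>"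
      using east_heat_marginal[OF assms] east_pi_marginal[OF assms(1) s] by simp
    finally show "\<bar>\<Sum>\<sigma>'\<in>{x\<in>?S'. east_restrict L x = \<sigma>}. ?d \<sigma>'\<bar> = \<bar>east_heat q L t \<eta> \<sigma> - east_pi q L \<sigma>\<bar>"
      by simp
  qed
  finally show ?thesis unfolding east_tv_def by simp
qed

section \<open>The uniformized chain and a Doeblin bound\<close>

text \<open>The chain uniformized at rate \<open>L + 1\<close>, which exceeds every exit rate (at most \<open>L\<close>),
  jumps according to the stochastic matrix \<open>I + Q/(L+1)\<close>.\<close>

definition east_jump :: "real \<Rightarrow> nat \<Rightarrow> (nat \<Rightarrow> bool) \<Rightarrow> (nat \<Rightarrow> bool) \<Rightarrow> real" where
  "east_jump q L = (\<lambda>x y. (if x = y then 1 else 0) + east_rate q L x y / real (Suc L))"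

definition east_empty :: "nat \<Rightarrow> bool" where "east_empty = (\<lambda>_. False)"

lemma east_empty_in_east_states: "east_empty \<in> east_states L"
  by (simp add: east_empty_def east_states_def)

text \<open>The Doeblin contraction factor: the uniformized chain empties every configuration in
  \<open>L\<close> jumps with probability at least \<open>(q/(L+1))^L\<close>.\<close>

definition east_theta :: "real \<Rightarrow> nat \<Rightarrow> real" where
  "east_theta q L = 1 - (q / real (Suc L)) ^ L"

definition jump_dist :: "real \<Rightarrow> nat \<Rightarrow> nat \<Rightarrow> (nat \<Rightarrow> bool) \<Rightarrow> real" where
  "jump_dist q L n \<eta> =
     (\<Sum>\<sigma>\<in>east_states L. \<bar>mat_pow (east_states L) (east_jump q L) n \<eta> \<sigma> - east_pi q L \<sigma>\<bar>)"

lemma jump_dist_nonneg: "0 \<le> jump_dist q L n \<eta>"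
  unfolding jump_dist_def by (rule sum_nonneg) simp

locale east_param =
  fixes q :: real
  assumes q_pos: "0 < q" and q_le_half: "q \<le> 1/2"
begin

lemma q_nonneg: "0 \<le> q" and q_le_one: "q \<le> 1" and q_le_p: "q \<le> 1 - q"
  using q_pos q_le_half by auto

lemma east_rate_bounded: "\<bar>east_rate q L \<eta> \<zeta>\<bar> \<le> real L"
  by (rule east_rate_abs_le[OF q_nonneg q_le_one])

lemma east_theta_bounds:
  assumes "1 \<le> L"
  shows "0 < east_theta q L" "east_theta q L < 1"
proof -
  have qc: "0 < q / real (Suc L)" "q / real (Suc L) < 1"
    using q_pos q_le_half by (auto simp: divide_less_eq)
  have "(q / real (Suc L)) ^ L \<le> (q / real (Suc L)) ^ 1"
    by (rule power_decreasing) (use assms qc in auto)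
  then have "(q / real (Suc L)) ^ L \<le> q / real (Suc L)" by (simp only: power_one_right)
  then show "0 < east_theta q L" using qc unfolding east_theta_def by linarith
  show "east_theta q L < 1" using qc by (simp add: east_theta_def)
qed

lemma east_jump_nonneg: "0 \<le> east_jump q L \<eta> \<zeta>"
proof (cases "\<eta> = \<zeta>")
  case True
  have "- real L \<le> east_rate q L \<eta> \<eta>" by (rule east_rate_diag_ge[OF q_nonneg q_le_one])
  then have "- 1 \<le> east_rate q L \<eta> \<eta> / real (Suc L)" by (simp add: field_simps)
  then show ?thesis using True by (simp add: east_jump_def)
next
  case False
  then show ?thesis using east_rate_nonneg[OF q_nonneg q_le_one False] by (simp add: east_jump_def)
qed

lemma east_jump_diag_ge: "1 / real (Suc L) \<le> east_jump q L \<eta> \<eta>"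
proof -
  have "- real L \<le> east_rate q L \<eta> \<eta>" by (rule east_rate_diag_ge[OF q_nonneg q_le_one])
  then show ?thesis by (simp add: east_jump_def field_simps)
qed

lemma east_jump_row_sum: "\<eta> \<in> east_states L \<Longrightarrow> (\<Sum>\<zeta>\<in>east_states L. east_jump q L \<eta> \<zeta>) = 1"
  using east_rate_row_sum[of \<eta> L q] finite_east_states[of L]
  by (simp add: east_jump_def sum.distrib sum_divide_distrib[symmetric])

lemma east_jump_clear_ge:
  assumes "x \<in> {1..L}" "east_c \<eta> x = 1"
  shows "q / real (Suc L) \<le> east_jump q L \<eta> (\<eta>(x := False))"
proof (cases "\<eta>(x := False) = \<eta>")
  case True
  have "q / real (Suc L) \<le> 1 / real (Suc L)" using q_le_one by (simp add: divide_right_mono)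
  then show ?thesis using east_jump_diag_ge[of L \<eta>] True by simp
next
  case False
  have "east_c \<eta> x * (if False then 1 - q else q) \<le> east_rate q L \<eta> (\<eta>(x := False))"
    by (rule east_rate_fun_upd_ge[OF q_nonneg q_le_one assms(1) False])
  then have "q \<le> east_rate q L \<eta> (\<eta>(x := False))" using assms(2) by simp
  then show ?thesis using False by (simp add: east_jump_def divide_right_mono)
qed

lemma east_jump_set_ge:
  assumes "x \<in> {1..L}" "east_c \<eta> x = 1" "\<eta>(x := True) \<noteq> \<eta>"
  shows "(1 - q) / real (Suc L) \<le> east_jump q L \<eta> (\<eta>(x := True))"
proof -
  have "east_c \<eta> x * (if True then 1 - q else q) \<le> east_rate q L \<eta> (\<eta>(x := True))"
    by (rule east_rate_fun_upd_ge[OF q_nonneg q_le_one assms(1) assms(3)])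
  then have "1 - q \<le> east_rate q L \<eta> (\<eta>(x := True))" using assms(2) by simp
  then show ?thesis using assms(3) by (simp add: east_jump_def divide_right_mono)
qed

lemma east_jump_invariant:
  assumes "\<sigma> \<in> east_states L"
  shows "(\<Sum>\<eta>\<in>east_states L. east_pi q L \<eta> * east_jump q L \<eta> \<sigma>) = east_pi q L \<sigma>"
proof -
  have r: "east_rate q L \<eta> \<sigma> = east_gen q L (\<lambda>\<zeta>. if \<zeta> = \<sigma> then 1 else 0) \<eta>" for \<eta>
    by (simp add: east_rate_def)
  have z: "(\<Sum>\<eta>\<in>east_states L. east_pi q L \<eta> * east_rate q L \<eta> \<sigma>) = 0"
    unfolding r by (rule east_pi_invariant)
  have "(\<Sum>\<eta>\<in>east_states L. east_pi q L \<eta> * east_jump q L \<eta> \<sigma>)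
     = (\<Sum>\<eta>\<in>east_states L. east_pi q L \<eta> * (if \<eta> = \<sigma> then 1 else 0))
       + (\<Sum>\<eta>\<in>east_states L. east_pi q L \<eta> * east_rate q L \<eta> \<sigma>) / real (Suc L)"
    by (simp add: east_jump_def algebra_simps sum.distrib sum_divide_distrib)
  also have "\<dots> = east_pi q L \<sigma>" using z assms finite_east_states[of L] by simp
  finally show ?thesis .
qed

lemma east_jump_pow_nonneg: "0 \<le> mat_pow (east_states L) (east_jump q L) n \<eta> \<zeta>"
  by (induction n arbitrary: \<eta>) (auto intro!: sum_nonneg mult_nonneg_nonneg east_jump_nonneg)

lemma east_jump_pow_row_sum:
  "\<eta> \<in> east_states L \<Longrightarrow> (\<Sum>\<zeta>\<in>east_states L. mat_pow (east_states L) (east_jump q L) n \<eta> \<zeta>) = 1"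
  by (rule mat_pow_row_sum[OF finite_east_states east_jump_row_sum])

lemma east_jump_pow_le_one: "\<eta> \<in> east_states L
    \<Longrightarrow> \<zeta> \<in> east_states L \<Longrightarrow> mat_pow (east_states L) (east_jump q L) n \<eta> \<zeta> \<le> 1"
  using member_le_sum[of \<zeta> "east_states L" "mat_pow (east_states L) (east_jump q L) n \<eta>"]
    east_jump_pow_row_sum[of \<eta> L n] east_jump_pow_nonneg finite_east_states by auto

lemma east_jump_pow_invariant:
  assumes "\<sigma> \<in> east_states L"
  shows "(\<Sum>\<eta>\<in>east_states L. east_pi q L \<eta> * mat_pow (east_states L) (east_jump q L) n \<eta> \<sigma>)
      = east_pi q L \<sigma>"
  using assms
proof (induction n arbitrary: \<sigma>)
  case 0 then show ?case using finite_east_states[of L] by (simp add: mult.commute)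
next
  case (Suc n)
  let ?S = "east_states L" and ?P = "east_jump q L"
  have "(\<Sum>\<eta>\<in>?S. east_pi q L \<eta> * mat_pow ?S ?P (Suc n) \<eta> \<sigma>)
     = (\<Sum>\<eta>\<in>?S. east_pi q L \<eta> * (\<Sum>z\<in>?S. mat_pow ?S ?P n \<eta> z * ?P z \<sigma>))"
    using mat_pow_Suc_right[OF finite_east_states _ Suc.prems] by (intro sum.cong refl) (simp del: mat_pow.simps)
  also have "\<dots> = (\<Sum>\<eta>\<in>?S. \<Sum>z\<in>?S. east_pi q L \<eta> * mat_pow ?S ?P n \<eta> z * ?P z \<sigma>)"
    by (simp add: sum_distrib_left mult.assoc)
  also have "\<dots> = (\<Sum>z\<in>?S. \<Sum>\<eta>\<in>?S. east_pi q L \<eta> * mat_pow ?S ?P n \<eta> z * ?P z \<sigma>)"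
    by (rule sum.swap)
  also have "\<dots> = (\<Sum>z\<in>?S. (\<Sum>\<eta>\<in>?S. east_pi q L \<eta> * mat_pow ?S ?P n \<eta> z) * ?P z \<sigma>)"
    by (simp add: sum_distrib_right)
  also have "\<dots> = (\<Sum>z\<in>?S. east_pi q L z * ?P z \<sigma>)" using Suc.IH by simp
  also have "\<dots> = east_pi q L \<sigma>" by (rule east_jump_invariant[OF Suc.prems])
  finally show ?case .
qed

lemma east_clear_next_site:
  assumes L: "1 \<le> L" and h: "\<eta> \<in> east_states L" and cl: "\<forall>y. y \<le> j \<longrightarrow> \<not> \<eta> y"
  defines "x \<equiv> min (Suc j) L"
  shows "x \<in> {1..L}" "east_c \<eta> x = 1" "\<forall>y. y \<le> Suc j \<longrightarrow> \<not> (\<eta>(x := False)) y"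
proof -
  show "x \<in> {1..L}" using L by (simp add: x_def)
  show "east_c \<eta> x = 1"
  proof (cases "x = 1")
    case False
    then have "x - 1 \<le> j" by (simp add: x_def)
    then show ?thesis using cl False by (simp add: east_c_def)
  qed (simp add: east_c_def)
  show "\<forall>y. y \<le> Suc j \<longrightarrow> \<not> (\<eta>(x := False)) y"
  proof (intro allI impI)
    fix y assume y: "y \<le> Suc j"
    show "\<not> (\<eta>(x := False)) y"
    proof (cases "y = x")
      case False
      show ?thesis
      proof (cases "y \<le> j")
        case True then show ?thesis using cl False by simp
      next
        case nj: False
        then have "y = Suc j" using y by simp
        then have "y > L" using False by (simp add: x_def min_def split: if_splits)
        then show ?thesis using h False by (auto simp: east_states_def)
      qed
    qed simp
  qed
qed

text \<open>Emptying the configuration from left to right: once the sites \<open>\<le> j\<close> are empty, site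
  \<open>min (j+1) L\<close> is unconstrained and is emptied in one step with probability at least
  \<open>q/(L+1)\<close>.\<close>

lemma east_jump_pow_empty_ge_cleared:
  assumes L: "1 \<le> L" and "\<eta> \<in> east_states L" "\<forall>y. y \<le> j \<longrightarrow> \<not> \<eta> y" "L \<le> j + n"
  shows "(q / real (Suc L)) ^ n \<le> mat_pow (east_states L) (east_jump q L) n \<eta> east_empty"
  using assms(2-)
proof (induction n arbitrary: \<eta> j)
  case 0
  then have "\<eta> = east_empty" by (auto simp: east_empty_def east_states_def fun_eq_iff)
  then show ?case by simp
next
  case (Suc n)
  let ?S = "east_states L" and ?P = "east_jump q L"
  define x where "x = min (Suc j) L"
  note next_site = east_clear_next_site[OF L Suc.prems(1,2), folded x_def]
  have h': "\<eta>(x := False) \<in> ?S" by (rule fun_upd_False_in_east_states[OF Suc.prems(1)])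
  have "L \<le> Suc j + n" using Suc.prems(3) by simp
  note IH = Suc.IH[OF h' next_site(3) this]
  have "q / real (Suc L) * (q / real (Suc L)) ^ n
      \<le> ?P \<eta> (\<eta>(x := False)) * mat_pow ?S ?P n (\<eta>(x := False)) east_empty"
    by (intro mult_mono east_jump_clear_ge next_site IH) (auto intro: east_jump_nonneg simp: q_nonneg)
  also have "\<dots> \<le> (\<Sum>\<zeta>\<in>?S. ?P \<eta> \<zeta> * mat_pow ?S ?P n \<zeta> east_empty)"
    by (rule member_le_sum[OF h'])
       (auto intro!: mult_nonneg_nonneg east_jump_nonneg east_jump_pow_nonneg simp: finite_east_states)
  finally show ?case by simp
qed

lemma east_jump_pow_empty_ge:
  assumes "1 \<le> L" "\<eta> \<in> east_states L"
  shows "(q / real (Suc L)) ^ L \<le> mat_pow (east_states L) (east_jump q L) L \<eta> east_empty"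
  using east_jump_pow_empty_ge_cleared[OF assms, of 0] assms(2) by (auto simp: east_states_def)

lemma jump_dist_le_2: "\<eta> \<in> east_states L \<Longrightarrow> jump_dist q L n \<eta> \<le> 2"
proof -
  assume h: "\<eta> \<in> east_states L"
  have "jump_dist q L n \<eta>
      \<le> (\<Sum>\<sigma>\<in>east_states L. mat_pow (east_states L) (east_jump q L) n \<eta> \<sigma> + east_pi q L \<sigma>)"
    unfolding jump_dist_def using east_jump_pow_nonneg east_pi_nonneg[OF q_nonneg q_le_one]
    by (intro sum_mono) (auto simp: abs_le_iff)
  also have "\<dots> = 2" using east_jump_pow_row_sum[OF h] east_pi_sum by (simp add: sum.distrib)
  finally show ?thesis .
qed

lemma jump_dist_contract:
  assumes L: "1 \<le> L" and h: "\<eta> \<in> east_states L"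
  shows "jump_dist q L (n + L) \<eta> \<le> east_theta q L * jump_dist q L n \<eta>"
proof -
  let ?S = "east_states L" and ?P = "east_jump q L"
  define v where "v z = mat_pow ?S ?P n \<eta> z - east_pi q L z" for z
  have eq: "mat_pow ?S ?P (n + L) \<eta> \<sigma> - east_pi q L \<sigma>
      = (\<Sum>z\<in>?S. v z * mat_pow ?S ?P L z \<sigma>)" if s: "\<sigma> \<in> ?S" for \<sigma>
  proof -
    have "mat_pow ?S ?P (n + L) \<eta> \<sigma> = (\<Sum>z\<in>?S. mat_pow ?S ?P n \<eta> z * mat_pow ?S ?P L z \<sigma>)"
      by (rule mat_pow_add[OF finite_east_states h])
    moreover have "east_pi q L \<sigma> = (\<Sum>z\<in>?S. east_pi q L z * mat_pow ?S ?P L z \<sigma>)"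
      using east_jump_pow_invariant[OF s, of L] by simp
    ultimately show ?thesis by (simp add: v_def left_diff_distrib sum_subtractf)
  qed
  have "jump_dist q L (n + L) \<eta> = (\<Sum>\<sigma>\<in>?S. \<bar>\<Sum>z\<in>?S. v z * mat_pow ?S ?P L z \<sigma>\<bar>)"
    unfolding jump_dist_def using eq by (intro sum.cong refl) simp
  also have "\<dots> \<le> east_theta q L * (\<Sum>z\<in>?S. \<bar>v z\<bar>)"
    unfolding east_theta_def
  proof (rule doeblin_contraction[OF finite_east_states east_empty_in_east_states])
    show "(\<Sum>z\<in>?S. v z) = 0"
      using east_jump_pow_row_sum[OF h] east_pi_sum by (simp add: v_def sum_subtractf)
    show "\<And>z. z \<in> ?S \<Longrightarrow> (q / real (Suc L)) ^ L \<le> mat_pow ?S ?P L z east_empty"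
      by (rule east_jump_pow_empty_ge[OF L])
  qed (auto intro: east_jump_pow_nonneg east_jump_pow_row_sum)
  finally show ?thesis unfolding jump_dist_def v_def .
qed

lemma jump_dist_bound:
  assumes L: "1 \<le> L" and h: "\<eta> \<in> east_states L"
  shows "jump_dist q L n \<eta> \<le> 2 * east_theta q L ^ (n div L)"
proof (induction n rule: less_induct)
  case (less n)
  define \<theta> where "\<theta> = east_theta q L"
  have th0: "0 \<le> \<theta>" using east_theta_bounds[OF L] by (simp add: \<theta>_def)
  show ?case
  proof (cases "n < L")
    case True then show ?thesis using jump_dist_le_2[OF h] by simp
  next
    case False
    then obtain m where m: "n = m + L" by (metis add.commute le_add_diff_inverse not_less)
    have "jump_dist q L n \<eta> \<le> \<theta> * jump_dist q L m \<eta>"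
      unfolding m \<theta>_def by (rule jump_dist_contract[OF L h])
    also have "\<dots> \<le> \<theta> * (2 * \<theta> ^ (m div L))"
      using less.IH[of m] m L th0 by (intro mult_left_mono) (auto simp: \<theta>_def)
    also have "\<dots> = 2 * \<theta> ^ (n div L)" using L by (simp add: m)
    finally show ?thesis by (simp add: \<theta>_def)
  qed
qed

section \<open>Mixing time\<close>

lemma east_heat_uniformization:
  assumes "\<eta> \<in> east_states L"
  shows "east_heat q L t \<eta> \<sigma> = exp (- (real (Suc L) * t)) *
     (\<Sum>n. (real (Suc L) * t) ^ n / fact n * mat_pow (east_states L) (east_jump q L) n \<eta> \<sigma>)"
  unfolding east_heat_def east_jump_def
  by (rule mat_exp_uniformization[OF finite_east_states assms _ east_rate_bounded]) simp

lemma east_pi_le_one: "east_pi q L \<sigma> \<le> 1"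
  unfolding east_pi_def using q_nonneg q_le_one by (intro prod_le_1) auto

lemma east_heat_minus_pi_series:
  assumes h: "\<eta> \<in> east_states L" and s: "\<sigma> \<in> east_states L"
  shows "east_heat q L t \<eta> \<sigma> - east_pi q L \<sigma> = exp (- (real (Suc L) * t)) *
     (\<Sum>n. (real (Suc L) * t) ^ n / fact n *
        (mat_pow (east_states L) (east_jump q L) n \<eta> \<sigma> - east_pi q L \<sigma>))"
proof -
  let ?S = "east_states L" and ?P = "east_jump q L"
  define c where "c = real (Suc L)"
  define w where "w n = (c * t) ^ n / fact n" for n
  have w_sums: "w sums exp (c * t)" unfolding w_def by (rule sums_exp_real)
  have "summable (\<lambda>n. w n * mat_pow ?S ?P n \<eta> \<sigma>)"
  proof (rule summable_comparison_test'[OF summable_abs_exp_series])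
    fix n
    have "norm (w n * mat_pow ?S ?P n \<eta> \<sigma>) = \<bar>w n\<bar> * mat_pow ?S ?P n \<eta> \<sigma>"
      using east_jump_pow_nonneg[of L n \<eta> \<sigma>] by (simp add: abs_mult)
    also have "\<dots> \<le> \<bar>w n\<bar>" by (rule mult_left_le[OF east_jump_pow_le_one[OF h s]]) simp
    finally show "norm (w n * mat_pow ?S ?P n \<eta> \<sigma>) \<le> \<bar>(c * t) ^ n / fact n\<bar>" by (simp add: w_def)
  qed
  moreover have "summable (\<lambda>n. w n * east_pi q L \<sigma>)"
    by (rule summable_mult2[OF sums_summable[OF w_sums]])
  ultimately have "(\<Sum>n. w n * (mat_pow ?S ?P n \<eta> \<sigma> - east_pi q L \<sigma>))
      = (\<Sum>n. w n * mat_pow ?S ?P n \<eta> \<sigma>) - (\<Sum>n. w n * east_pi q L \<sigma>)"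
    by (simp add: right_diff_distrib suminf_diff)
  also have "(\<Sum>n. w n * east_pi q L \<sigma>) = (\<Sum>n. w n) * east_pi q L \<sigma>"
    by (rule suminf_mult2[symmetric, OF sums_summable[OF w_sums]])
  also have "(\<Sum>n. w n) = exp (c * t)" by (rule sums_unique[OF w_sums, symmetric])
  finally have "exp (- (c * t)) * (\<Sum>n. w n * (mat_pow ?S ?P n \<eta> \<sigma> - east_pi q L \<sigma>))
      = exp (- (c * t)) * (\<Sum>n. w n * mat_pow ?S ?P n \<eta> \<sigma>) - east_pi q L \<sigma>"
    by (simp add: right_diff_distrib exp_minus_inverse mult.assoc[symmetric]
        mult.commute[of "exp (- (c * t))"])
  also have "exp (- (c * t)) * (\<Sum>n. w n * mat_pow ?S ?P n \<eta> \<sigma>) = east_heat q L t \<eta> \<sigma>"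
    unfolding east_heat_uniformization[OF h] w_def c_def ..
  finally show ?thesis unfolding c_def[symmetric] w_def[symmetric] by simp
qed

lemma east_tv_le_jump_dist_series:
  assumes h: "\<eta> \<in> east_states L" and t: "0 \<le> t"
  shows "east_tv q L t \<eta> \<le> exp (- (real (Suc L) * t)) / 2 *
     (\<Sum>n. (real (Suc L) * t) ^ n / fact n * jump_dist q L n \<eta>)"
proof -
  let ?S = "east_states L" and ?P = "east_jump q L"
  define c where "c = real (Suc L)"
  define w where "w n = (c * t) ^ n / fact n" for n
  define d where "d n \<sigma> = mat_pow ?S ?P n \<eta> \<sigma> - east_pi q L \<sigma>" for n \<sigma>
  have w_nonneg: "0 \<le> w n" for n using t by (simp add: w_def c_def)
  have w_summable: "summable w" unfolding w_def using sums_exp_real by (rule sums_summable)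
  have d_summable: "summable (\<lambda>n. w n * \<bar>d n \<sigma>\<bar>)" if s: "\<sigma> \<in> ?S" for \<sigma>
  proof (rule summable_comparison_test'[OF w_summable])
    have "\<bar>d n \<sigma>\<bar> \<le> 1" for n
      using east_jump_pow_le_one[OF h s, of n] east_jump_pow_nonneg[of L n \<eta> \<sigma>]
        east_pi_nonneg[OF q_nonneg q_le_one, of L \<sigma>] east_pi_le_one[of L \<sigma>]
      by (simp add: d_def abs_le_iff)
    then show "norm (w n * \<bar>d n \<sigma>\<bar>) \<le> w n" for n
      using w_nonneg[of n] by (simp add: abs_mult mult_left_le)
  qed
  have pointwise: "\<bar>east_heat q L t \<eta> \<sigma> - east_pi q L \<sigma>\<bar> \<le> exp (- (c * t)) * (\<Sum>n. w n * \<bar>d n \<sigma>\<bar>)"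
    if s: "\<sigma> \<in> ?S" for \<sigma>
  proof -
    have "\<bar>\<Sum>n. w n * d n \<sigma>\<bar> \<le> (\<Sum>n. \<bar>w n * d n \<sigma>\<bar>)"
      by (rule summable_rabs) (use d_summable[OF s] w_nonneg in \<open>simp add: abs_mult\<close>)
    also have "\<dots> = (\<Sum>n. w n * \<bar>d n \<sigma>\<bar>)" using w_nonneg by (simp add: abs_mult)
    finally show ?thesis
      unfolding east_heat_minus_pi_series[OF h s] by (simp add: abs_mult w_def c_def d_def)
  qed
  have "(\<Sum>\<sigma>\<in>?S. \<Sum>n. w n * \<bar>d n \<sigma>\<bar>) = (\<Sum>n. \<Sum>\<sigma>\<in>?S. w n * \<bar>d n \<sigma>\<bar>)"
    by (rule suminf_sum[symmetric]) (rule d_summable)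
  also have "\<dots> = (\<Sum>n. w n * jump_dist q L n \<eta>)" by (simp add: jump_dist_def d_def sum_distrib_left)
  finally have swap: "(\<Sum>\<sigma>\<in>?S. \<Sum>n. w n * \<bar>d n \<sigma>\<bar>) = (\<Sum>n. w n * jump_dist q L n \<eta>)" .
  have "east_tv q L t \<eta> \<le> 1/2 * (\<Sum>\<sigma>\<in>?S. exp (- (c * t)) * (\<Sum>n. w n * \<bar>d n \<sigma>\<bar>))"
    unfolding east_tv_def by (intro mult_left_mono sum_mono pointwise) auto
  also have "\<dots> = exp (- (c * t)) / 2 * (\<Sum>n. w n * jump_dist q L n \<eta>)"
    by (simp add: sum_distrib_left[symmetric] swap)
  finally show ?thesis by (simp add: w_def c_def)
qed

lemma east_tv_le_exp:
  assumes L: "1 \<le> L" and h: "\<eta> \<in> east_states L" and t: "0 \<le> t"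
  shows "east_tv q L t \<eta> \<le>
    exp (- (real (Suc L) * t * (1 - east_theta q L powr (1 / real L)))) / east_theta q L"
proof -
  define c where "c = real (Suc L)"
  define \<theta> where "\<theta> = east_theta q L"
  define \<rho> where "\<rho> = \<theta> powr (1 / real L)"
  define w where "w n = (c * t) ^ n / fact n" for n
  have \<theta>: "0 < \<theta>" "\<theta> < 1" using east_theta_bounds[OF L] by (auto simp: \<theta>_def)
  have w_nonneg: "0 \<le> w n" for n using t by (simp add: w_def c_def)
  have w_summable: "summable w" unfolding w_def using sums_exp_real by (rule sums_summable)
  have geom: "(\<lambda>n. w n * (2 * \<rho> ^ n / \<theta>)) sums (2 * exp (c * t * \<rho>) / \<theta>)"
    using sums_mult[OF sums_exp_real[of "c * t * \<rho>"], of "2 / \<theta>"]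
    by (simp add: w_def field_simps)
  have dist_le: "jump_dist q L n \<eta> \<le> 2 * \<rho> ^ n / \<theta>" for n
    using jump_dist_bound[OF L h, of n] power_div_le_powr_root[of \<theta> L n] \<theta> L
    by (simp add: \<theta>_def \<rho>_def)
  have dist_summable: "summable (\<lambda>n. w n * jump_dist q L n \<eta>)"
  proof (rule summable_comparison_test'[OF summable_mult[OF w_summable, of 2]])
    fix n
    have "norm (w n * jump_dist q L n \<eta>) = w n * jump_dist q L n \<eta>"
      using w_nonneg[of n] jump_dist_nonneg[of q L n \<eta>] by (simp add: abs_mult)
    also have "\<dots> \<le> w n * 2" by (rule mult_left_mono[OF jump_dist_le_2[OF h] w_nonneg])
    finally show "norm (w n * jump_dist q L n \<eta>) \<le> 2 * w n" by simp
  qed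
  have "(\<Sum>n. w n * jump_dist q L n \<eta>) \<le> (\<Sum>n. w n * (2 * \<rho> ^ n / \<theta>))"
    by (rule suminf_le[OF _ dist_summable sums_summable[OF geom]]) (intro mult_left_mono dist_le w_nonneg)
  also have "\<dots> = 2 * exp (c * t * \<rho>) / \<theta>" by (rule sums_unique[OF geom, symmetric])
  finally have series_le: "(\<Sum>n. w n * jump_dist q L n \<eta>) \<le> 2 * exp (c * t * \<rho>) / \<theta>" .
  have "east_tv q L t \<eta> \<le> exp (- (c * t)) / 2 * (\<Sum>n. w n * jump_dist q L n \<eta>)"
    using east_tv_le_jump_dist_series[OF h t] by (simp add: w_def c_def)
  also have "\<dots> \<le> exp (- (c * t)) / 2 * (2 * exp (c * t * \<rho>) / \<theta>)"
    by (rule mult_left_mono[OF series_le]) simp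
  also have "\<dots> = exp (- (c * t * (1 - \<rho>))) / \<theta>" by (simp add: exp_add[symmetric] algebra_simps)
  finally show ?thesis by (simp add: c_def \<rho>_def \<theta>_def)
qed

lemma east_mixing_time_exists:
  assumes L: "1 \<le> L"
  shows "\<exists>t0>0. \<forall>\<eta>\<in>east_states L. east_tv q L t0 \<eta> \<le> 1/4"
proof -
  define c where "c = real (Suc L)"
  define \<theta> where "\<theta> = east_theta q L"
  define \<rho> where "\<rho> = \<theta> powr (1 / real L)"
  have \<theta>: "0 < \<theta>" "\<theta> < 1" using east_theta_bounds[OF L] by (auto simp: \<theta>_def)
  have "\<rho> < 1 powr (1 / real L)" unfolding \<rho>_def by (rule powr_less_mono2) (use \<theta> L in auto)
  then have \<rho>: "\<rho> < 1" by simp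
  define t0 where "t0 = max 1 (ln (4 / \<theta>) / (c * (1 - \<rho>)))"
  have k: "0 < c * (1 - \<rho>)" using \<rho> by (simp add: c_def)
  have "ln (4 / \<theta>) / (c * (1 - \<rho>)) \<le> t0" by (simp add: t0_def)
  then have "ln (4 / \<theta>) \<le> t0 * (c * (1 - \<rho>))" using k by (simp add: pos_divide_le_eq)
  then have "ln (4 / \<theta>) \<le> c * t0 * (1 - \<rho>)" by (simp add: ac_simps)
  then have "exp (- (c * t0 * (1 - \<rho>))) \<le> exp (- ln (4 / \<theta>))" by simp
  also have "\<dots> = \<theta> / 4" using \<theta> by (simp add: exp_minus)
  finally have "exp (- (c * t0 * (1 - \<rho>))) / \<theta> \<le> 1/4" using \<theta> by (simp add: divide_le_eq)
  moreover have "0 < t0" by (simp add: t0_def)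
  ultimately show ?thesis
    using east_tv_le_exp[OF L, of _ t0] unfolding c_def \<rho>_def \<theta>_def by (meson less_imp_le order_trans)
qed

lemma T_mix_mono:
  assumes "1 \<le> L" "L \<le> L'"
  shows "T_mix q L \<le> T_mix q L'"
proof -
  let ?M = "\<lambda>L. {t. 0 \<le> t \<and> (\<forall>\<eta>\<in>east_states L. east_tv q L t \<eta> \<le> 1/4)}"
  obtain t0 where "t0 > 0" "\<forall>\<eta>\<in>east_states L'. east_tv q L' t0 \<eta> \<le> 1/4"
    using east_mixing_time_exists[of L'] assms by auto
  then have "t0 \<in> ?M L'" by simp
  then have "?M L' \<noteq> {}" by blast
  moreover have "bdd_below (?M L)" by (rule bdd_belowI[of _ 0]) auto
  moreover have "?M L' \<subseteq> ?M L"
  proof (intro subsetI CollectI conjI ballI)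
    show "0 \<le> t" if "t \<in> ?M L'" for t using that by simp
    fix t \<eta> assume t: "t \<in> ?M L'" and \<eta>: "\<eta> \<in> east_states L"
    have "\<eta> \<in> east_states L'" using \<eta> east_states_mono[OF assms(2)] by blast
    then show "east_tv q L t \<eta> \<le> 1/4"
      using t east_tv_mono[OF assms(2) \<eta> q_nonneg q_le_one, of t] by auto
  qed
  ultimately show ?thesis unfolding T_mix_def by (rule cInf_superset_mono)
qed

end

definition east_eigenvalues :: "real \<Rightarrow> nat \<Rightarrow> real set" where
  "east_eigenvalues q L = {ev. ev > 0 \<and> (\<exists>f. (\<exists>\<sigma>\<in>east_states L. f \<sigma> \<noteq> 0) \<and>
      (\<forall>\<sigma>\<in>east_states L. - east_gen q L f \<sigma> = ev * f \<sigma>))}"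

lemma east_gap_eq_Inf_eigenvalues: "east_gap q L = Inf (east_eigenvalues q L)"
  by (simp add: east_gap_def east_eigenvalues_def)

context east_param begin

lemma one_in_east_eigenvalues:
  assumes L: "1 \<le> L"
  shows "1 \<in> east_eigenvalues q L"
proof -
  define f where "f \<sigma> = (if \<sigma> (1::nat) then 1 else 0) - (1 - q)" for \<sigma> :: "nat \<Rightarrow> bool"
  have "east_empty \<in> east_states L" by (rule east_empty_in_east_states)
  moreover have "f east_empty \<noteq> 0" using q_le_half by (simp add: f_def east_empty_def)
  moreover have "- east_gen q L f \<sigma> = 1 * f \<sigma>" for \<sigma>
  proof -
    have "east_gen q L f \<sigma> = (\<Sum>x\<in>insert 1 {2..L}. east_c \<sigma> x *
      ((1 - q) * f (\<sigma>(x := True)) + q * f (\<sigma>(x := False)) - f \<sigma>))"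
      unfolding east_gen_def using L by (intro sum.cong) auto
    also have "\<dots> = east_c \<sigma> 1 * ((1 - q) * f (\<sigma>(1 := True)) + q * f (\<sigma>(1 := False)) - f \<sigma>)"
    proof -
      have "(\<Sum>x\<in>{2..L}. east_c \<sigma> x * ((1 - q) * f (\<sigma>(x := True)) + q * f (\<sigma>(x := False)) - f \<sigma>)) = 0"
        by (intro sum.neutral) (auto simp: f_def algebra_simps)
      then show ?thesis by simp
    qed
    also have "\<dots> = - f \<sigma>" by (simp add: east_c_def f_def algebra_simps)
    finally show ?thesis by simp
  qed
  ultimately show ?thesis unfolding east_eigenvalues_def by auto
qed

lemma east_eigenvalues_mono:
  assumes "L \<le> L'"
  shows "east_eigenvalues q L \<subseteq> east_eigenvalues q L'"
proof
  fix ev assume "ev \<in> east_eigenvalues q L"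
  then obtain f \<sigma> where ev: "ev > 0" and s: "\<sigma> \<in> east_states L" "f \<sigma> \<noteq> 0"
    and e: "\<forall>\<sigma>\<in>east_states L. - east_gen q L f \<sigma> = ev * f \<sigma>" unfolding east_eigenvalues_def by blast
  define g where "g \<zeta> = f (east_restrict L \<zeta>)" for \<zeta>
  have "\<sigma> \<in> east_states L'" using s east_states_mono[OF assms] by blast
  moreover have "g \<sigma> \<noteq> 0" using s by (simp add: g_def east_restrict_id)
  moreover have "\<forall>\<zeta>\<in>east_states L'. - east_gen q L' g \<zeta> = ev * g \<zeta>"
  proof
    fix \<zeta> assume "\<zeta> \<in> east_states L'"
    then have "east_restrict L \<zeta> \<in> east_states L" by (rule east_restrict_in_east_states)
    then show "- east_gen q L' g \<zeta> = ev * g \<zeta>"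
      unfolding g_def east_gen_east_restrict[OF assms] using e by simp
  qed
  ultimately show "ev \<in> east_eigenvalues q L'" using ev unfolding east_eigenvalues_def by blast
qed

lemma east_rate_pow_eigenfunction:
  assumes e: "\<forall>\<sigma>\<in>east_states L. - east_gen q L f \<sigma> = ev * f \<sigma>" and h: "\<eta> \<in> east_states L"
  shows "(\<Sum>\<sigma>\<in>east_states L. mat_pow (east_states L) (east_rate q L) n \<eta> \<sigma> * f \<sigma>) = (- ev) ^ n * f \<eta>"
  using h
proof (induction n arbitrary: \<eta>)
  case 0 then show ?case using finite_east_states[of L] by simp
next
  case (Suc n)
  let ?S = "east_states L" and ?Q = "east_rate q L"
  have "(\<Sum>\<sigma>\<in>?S. mat_pow ?S ?Q (Suc n) \<eta> \<sigma> * f \<sigma>) = (\<Sum>\<sigma>\<in>?S. \<Sum>\<zeta>\<in>?S. ?Q \<eta> \<zeta> * (mat_pow ?S ?Q n \<zeta> \<sigma> * f \<sigma>))"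
    by (simp add: sum_distrib_right mult.assoc)
  also have "\<dots> = (\<Sum>\<zeta>\<in>?S. \<Sum>\<sigma>\<in>?S. ?Q \<eta> \<zeta> * (mat_pow ?S ?Q n \<zeta> \<sigma> * f \<sigma>))" by (rule sum.swap)
  also have "\<dots> = (\<Sum>\<zeta>\<in>?S. ?Q \<eta> \<zeta> * ((- ev) ^ n * f \<zeta>))"
    by (intro sum.cong refl) (simp add: sum_distrib_left[symmetric] Suc.IH)
  also have "\<dots> = (- ev) ^ n * east_gen q L f \<eta>" unfolding east_gen_eq_rate_sum[OF Suc.prems]
    by (simp add: sum_distrib_left algebra_simps)
  also have "\<dots> = (- ev) ^ Suc n * f \<eta>"
  proof -
    have g: "east_gen q L f \<eta> = - (ev * f \<eta>)" using e Suc.prems by (metis minus_minus)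
    show ?thesis unfolding g by (simp add: algebra_simps)
  qed
  finally show ?case .
qed

lemma east_heat_eigenfunction:
  assumes e: "\<forall>\<sigma>\<in>east_states L. - east_gen q L f \<sigma> = ev * f \<sigma>" and h: "\<eta> \<in> east_states L"
  shows "(\<Sum>\<sigma>\<in>east_states L. east_heat q L t \<eta> \<sigma> * f \<sigma>) = exp (- ev * t) * f \<eta>"
proof -
  let ?S = "east_states L" and ?Q = "east_rate q L"
  have sm: "summable (\<lambda>n. t ^ n / fact n * mat_pow ?S ?Q n \<eta> \<sigma> * f \<sigma>)" for \<sigma>
    by (rule summable_mult2) (rule summable_mat_exp_series[OF finite_east_states east_rate_bounded])
  have "(\<Sum>\<sigma>\<in>?S. east_heat q L t \<eta> \<sigma> * f \<sigma>) = (\<Sum>\<sigma>\<in>?S. \<Sum>n. t ^ n / fact n * mat_pow ?S ?Q n \<eta> \<sigma> * f \<sigma>)"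
    unfolding east_heat_def mat_exp_def
    by (intro sum.cong refl) (rule suminf_mult2[OF summable_mat_exp_series[OF finite_east_states east_rate_bounded]])
  also have "\<dots> = (\<Sum>n. \<Sum>\<sigma>\<in>?S. t ^ n / fact n * mat_pow ?S ?Q n \<eta> \<sigma> * f \<sigma>)"
    by (rule suminf_sum[symmetric]) (rule sm)
  also have "\<dots> = (\<Sum>n. (- ev * t) ^ n / fact n * f \<eta>)"
  proof (intro suminf_cong)
    fix n
    have "(\<Sum>\<sigma>\<in>?S. t ^ n / fact n * mat_pow ?S ?Q n \<eta> \<sigma> * f \<sigma>)
        = t ^ n / fact n * (\<Sum>\<sigma>\<in>?S. mat_pow ?S ?Q n \<eta> \<sigma> * f \<sigma>)"
      by (simp add: sum_distrib_left mult.assoc)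
    also have "\<dots> = (- ev * t) ^ n / fact n * f \<eta>" unfolding east_rate_pow_eigenfunction[OF e h]
      by (simp add: power_mult_distrib[symmetric] mult.commute)
    finally show "(\<Sum>\<sigma>\<in>?S. t ^ n / fact n * mat_pow ?S ?Q n \<eta> \<sigma> * f \<sigma>) = (- ev * t) ^ n / fact n * f \<eta>" .
  qed
  also have "\<dots> = exp (- ev * t) * f \<eta>"
    using sums_unique[OF sums_mult2[OF sums_exp_real, of "- ev * t" "f \<eta>"]] by simp
  finally show ?thesis .
qed

lemma east_eigenvalue_ge_mixing:
  assumes ev: "ev \<in> east_eigenvalues q L" and t0: "\<forall>\<eta>\<in>east_states L. east_tv q L t0 \<eta> \<le> 1/4" "0 < t0"
  shows "ln 2 / t0 \<le> ev"
proof -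
  obtain f \<sigma>0 where ev0: "ev > 0" and s: "\<sigma>0 \<in> east_states L" "f \<sigma>0 \<noteq> 0"
    and e: "\<forall>\<sigma>\<in>east_states L. - east_gen q L f \<sigma> = ev * f \<sigma>"
      using ev unfolding east_eigenvalues_def by blast
  let ?S = "east_states L"
  define M where "M = Max ((\<lambda>\<sigma>. \<bar>f \<sigma>\<bar>) ` ?S)"
  have ne: "(\<lambda>\<sigma>. \<bar>f \<sigma>\<bar>) ` ?S \<noteq> {}" using s by auto
  obtain \<eta> where h: "\<eta> \<in> ?S" and hM: "\<bar>f \<eta>\<bar> = M"
    using Max_in[OF finite_imageI[OF finite_east_states] ne] unfolding M_def by auto
  have Mge: "\<bar>f \<sigma>\<bar> \<le> M" if "\<sigma> \<in> ?S" for \<sigma>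
    unfolding M_def using that by (intro Max_ge finite_imageI finite_east_states) auto
  have M0: "M > 0" using Mge[OF s(1)] s(2) by simp
  have pif: "(\<Sum>\<sigma>\<in>?S. east_pi q L \<sigma> * f \<sigma>) = 0"
  proof -
    have "0 = (\<Sum>\<sigma>\<in>?S. east_pi q L \<sigma> * east_gen q L f \<sigma>)" by (rule east_pi_invariant[symmetric])
    also have "\<dots> = (\<Sum>\<sigma>\<in>?S. east_pi q L \<sigma> * (- ev * f \<sigma>))" 
    proof (intro sum.cong refl)
      fix \<sigma> assume "\<sigma> \<in> ?S"
      then have "east_gen q L f \<sigma> = - (ev * f \<sigma>)" using e by (metis minus_minus)
      then show "east_pi q L \<sigma> * east_gen q L f \<sigma> = east_pi q L \<sigma> * (- ev * f \<sigma>)" by simp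
    qed
    also have "\<dots> = - ev * (\<Sum>\<sigma>\<in>?S. east_pi q L \<sigma> * f \<sigma>)" by (simp add: sum_distrib_left algebra_simps)
    finally show ?thesis using ev0 by simp
  qed
  have "exp (- ev * t0) * M = \<bar>exp (- ev * t0) * f \<eta>\<bar>" using hM by (simp add: abs_mult)
  also have "\<dots> = \<bar>\<Sum>\<sigma>\<in>?S. (east_heat q L t0 \<eta> \<sigma> - east_pi q L \<sigma>) * f \<sigma>\<bar>"
    using east_heat_eigenfunction[OF e h, of t0] pif by (simp add: left_diff_distrib sum_subtractf)
  also have "\<dots> \<le> (\<Sum>\<sigma>\<in>?S. \<bar>east_heat q L t0 \<eta> \<sigma> - east_pi q L \<sigma>\<bar> * M)"
    by (rule order_trans[OF sum_abs sum_mono]) (auto simp: abs_mult intro!: mult_left_mono Mge)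
  also have "\<dots> = 2 * east_tv q L t0 \<eta> * M" by (simp add: east_tv_def sum_distrib_right)
  also have "\<dots> \<le> 2 * (1/4) * M" using t0(1) h M0 by (intro mult_right_mono) auto
  finally have "exp (- ev * t0) \<le> 1/2" using M0 by simp
  then have "ln (exp (- ev * t0)) \<le> ln (1/2)" by (subst ln_le_cancel_iff) auto
  then have "- ev * t0 \<le> ln (1/2)" by simp
  then have "ln 2 \<le> ev * t0" by (simp add: ln_div)
  then show ?thesis using t0(2) by (simp add: divide_le_eq)
qed

lemma T_rel_mono:
  assumes "1 \<le> L" "L \<le> L'"
  shows "T_rel q L \<le> T_rel q L'"
proof -
  have L': "1 \<le> L'" using assms by simp
  obtain t0 where t0: "t0 > 0" "\<forall>\<eta>\<in>east_states L'. east_tv q L' t0 \<eta> \<le> 1/4"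
    using east_mixing_time_exists[OF L'] by blast
  have ne: "east_eigenvalues q L \<noteq> {}" using one_in_east_eigenvalues[OF assms(1)] by blast
  have ne': "east_eigenvalues q L' \<noteq> {}" using one_in_east_eigenvalues[OF L'] by blast
  have bdd: "bdd_below (east_eigenvalues q L')"
    by (rule bdd_belowI[of _ 0]) (auto simp: east_eigenvalues_def)
  have g1: "east_gap q L' \<le> east_gap q L" unfolding east_gap_eq_Inf_eigenvalues
    by (rule cInf_superset_mono[OF ne bdd east_eigenvalues_mono[OF assms(2)]])
  have g0: "ln 2 / t0 \<le> east_gap q L'" unfolding east_gap_eq_Inf_eigenvalues
    by (rule cInf_greatest[OF ne']) (rule east_eigenvalue_ge_mixing[OF _ t0(2)], use t0 in auto)
  have "0 < ln 2 / t0" using t0 by simp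
  then have gp: "0 < east_gap q L'" using g0 by linarith
  show ?thesis unfolding T_rel_def using gp g1 by (simp add: frac_le)
qed

end

section \<open>Hitting time\<close>

definition east_alive :: "nat \<Rightarrow> (nat \<Rightarrow> bool) set" where
  "east_alive L = {\<sigma>\<in>east_states L. \<not> \<sigma> L}"

text \<open>The probability that the uniformized chain has not set site \<open>L\<close> within \<open>n\<close> jumps.\<close>

definition east_survival_jump :: "real \<Rightarrow> nat \<Rightarrow> nat \<Rightarrow> (nat \<Rightarrow> bool) \<Rightarrow> real" where
  "east_survival_jump q L n \<eta> = (\<Sum>\<sigma>\<in>east_alive L. mat_pow (east_alive L) (east_jump q L) n \<eta> \<sigma>)"

text \<open>The expected hitting time of \<open>{\<eta>_L = 1}\<close>: the expected number of jumps before hitting,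
  each jump taking mean time \<open>1/(L+1)\<close>.\<close>

definition east_hit_mean :: "real \<Rightarrow> nat \<Rightarrow> (nat \<Rightarrow> bool) \<Rightarrow> real" where
  "east_hit_mean q L \<eta> = (\<Sum>n. east_survival_jump q L n \<eta>) / real (Suc L)"

definition east_hit_lift :: "real \<Rightarrow> nat \<Rightarrow> (nat \<Rightarrow> bool) \<Rightarrow> real" where
  "east_hit_lift q L \<zeta> =
     (if \<zeta> \<in> east_alive (Suc L) \<and> \<zeta> L then east_hit_mean q L (\<zeta>(L := False)) else 0)"

lemma finite_east_alive: "finite (east_alive L)"
  unfolding east_alive_def using finite_east_states by simp

lemma east_alive_subset: "east_alive L \<subseteq> east_states L" unfolding east_alive_def by auto

lemma east_states_diff_target: "east_states L - east_target L = east_alive L"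
  by (auto simp: east_alive_def east_target_def)

lemma east_start_alive: "1 \<le> L \<Longrightarrow> east_start L \<in> east_alive L"
  by (auto simp: east_start_def east_alive_def east_states_def)

lemma sum_east_rate_subset:
  assumes "\<eta> \<in> east_states L" "S \<subseteq> east_states L"
  shows "(\<Sum>\<zeta>\<in>S. east_rate q L \<eta> \<zeta> * f \<zeta>) = east_gen q L (\<lambda>\<zeta>. if \<zeta> \<in> S then f \<zeta> else 0) \<eta>"
proof -
  have "east_gen q L (\<lambda>\<zeta>. if \<zeta> \<in> S then f \<zeta> else 0) \<eta>
      = (\<Sum>\<zeta>\<in>east_states L. if \<zeta> \<in> S then east_rate q L \<eta> \<zeta> * f \<zeta> else 0)"
    unfolding east_gen_eq_rate_sum[OF assms(1)] by (intro sum.cong refl) auto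
  also have "\<dots> = (\<Sum>\<zeta>\<in>east_states L \<inter> S. east_rate q L \<eta> \<zeta> * f \<zeta>)"
    by (rule sum.inter_restrict[OF finite_east_states, symmetric])
  also have "east_states L \<inter> S = S" using assms(2) by auto
  finally show ?thesis by simp
qed

context east_param begin

lemma east_alive_pow_nonneg: "0 \<le> mat_pow (east_alive L) (east_jump q L) n \<eta> \<zeta>"
  by (induction n arbitrary: \<eta>) (auto intro!: sum_nonneg mult_nonneg_nonneg east_jump_nonneg)

lemma east_survival_jump_nonneg: "0 \<le> east_survival_jump q L n \<eta>"
  unfolding east_survival_jump_def by (intro sum_nonneg east_alive_pow_nonneg)

lemma east_survival_jump_0: "\<eta> \<in> east_alive L \<Longrightarrow> east_survival_jump q L 0 \<eta> = 1"
  unfolding east_survival_jump_def using finite_east_alive by simp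

lemma east_survival_jump_Suc:
  "east_survival_jump q L (Suc n) \<eta> = (\<Sum>\<zeta>\<in>east_alive L. east_jump q L \<eta> \<zeta> * east_survival_jump q L n \<zeta>)"
  unfolding east_survival_jump_def by (rule sum_mat_pow_Suc)

lemma east_alive_row_sum_le: "\<eta> \<in> east_alive L \<Longrightarrow> (\<Sum>\<zeta>\<in>east_alive L. east_jump q L \<eta> \<zeta>) \<le> 1"
proof -
  assume h: "\<eta> \<in> east_alive L"
  have "(\<Sum>\<zeta>\<in>east_alive L. east_jump q L \<eta> \<zeta>) \<le> (\<Sum>\<zeta>\<in>east_states L. east_jump q L \<eta> \<zeta>)"
    by (rule sum_mono2[OF finite_east_states east_alive_subset]) (auto intro: east_jump_nonneg)
  also have "\<dots> = 1" using h east_alive_subset by (intro east_jump_row_sum) auto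
  finally show ?thesis .
qed

lemma east_survival_jump_le_one: "\<eta> \<in> east_alive L \<Longrightarrow> east_survival_jump q L n \<eta> \<le> 1"
proof (induction n arbitrary: \<eta>)
  case 0 then show ?case by (simp add: east_survival_jump_0)
next
  case (Suc n)
  have "east_survival_jump q L (Suc n) \<eta> \<le> (\<Sum>\<zeta>\<in>east_alive L. east_jump q L \<eta> \<zeta> * 1)"
    unfolding east_survival_jump_Suc by (intro sum_mono mult_left_mono Suc.IH east_jump_nonneg)
  also have "\<dots> \<le> 1" using east_alive_row_sum_le[OF Suc.prems] by simp
  finally show ?case .
qed

lemma east_survival_jump_step:
  assumes h: "\<eta> \<in> east_alive L" and h': "\<eta>' \<in> east_alive L"
  shows "east_jump q L \<eta> \<eta>' * (1 - east_survival_jump q L n \<eta>') \<le> 1 - east_survival_jump q L (Suc n) \<eta>"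
proof -
  have "east_survival_jump q L (Suc n) \<eta>
      = east_jump q L \<eta> \<eta>' * east_survival_jump q L n \<eta>'
        + (\<Sum>\<zeta>\<in>east_alive L - {\<eta>'}. east_jump q L \<eta> \<zeta> * east_survival_jump q L n \<zeta>)"
    unfolding east_survival_jump_Suc using h' finite_east_alive by (simp add: sum.remove)
  also have "(\<Sum>\<zeta>\<in>east_alive L - {\<eta>'}. east_jump q L \<eta> \<zeta> * east_survival_jump q L n \<zeta>)
      \<le> (\<Sum>\<zeta>\<in>east_alive L - {\<eta>'}. east_jump q L \<eta> \<zeta>)"
    by (intro sum_mono) (auto intro: mult_left_le east_survival_jump_le_one east_jump_nonneg)
  also have "\<dots> = (\<Sum>\<zeta>\<in>east_alive L. east_jump q L \<eta> \<zeta>) - east_jump q L \<eta> \<eta>'"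
    using h' finite_east_alive by (simp add: sum.remove)
  finally show ?thesis using east_alive_row_sum_le[OF h] by (simp add: algebra_simps)
qed

text \<open>Setting site \<open>L\<close> kills the chain; when \<open>L\<close> is unconstrained this happens in one jump
  with probability at least \<open>(1-q)/(L+1) \<ge> q/(L+1)\<close>.\<close>

lemma east_survival_jump_one_le:
  assumes L: "1 \<le> L" and h: "\<eta> \<in> east_alive L" and cL: "east_c \<eta> L = 1"
  shows "q / real (Suc L) \<le> 1 - east_survival_jump q L (Suc 0) \<eta>"
proof -
  have hs: "\<eta> \<in> east_states L" and nL: "\<not> \<eta> L" using h by (auto simp: east_alive_def)
  have ne: "\<eta>(L := True) \<noteq> \<eta>" using nL by (metis fun_upd_same)
  have Lin: "L \<in> {1..L}" using L by simp
  have t: "\<eta>(L := True) \<in> east_states L - east_alive L"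
    using fun_upd_in_east_states[OF hs Lin] by (auto simp: east_alive_def)
  have "q / real (Suc L) \<le> (1 - q) / real (Suc L)" using q_le_p by (simp add: divide_right_mono)
  also have "\<dots> \<le> east_jump q L \<eta> (\<eta>(L := True))" by (rule east_jump_set_ge[OF Lin cL ne])
  also have "\<dots> \<le> (\<Sum>\<zeta>\<in>east_states L - east_alive L. east_jump q L \<eta> \<zeta>)"
    by (rule member_le_sum[OF t]) (auto intro: east_jump_nonneg simp: finite_east_states)
  also have "\<dots> = (\<Sum>\<zeta>\<in>east_states L. east_jump q L \<eta> \<zeta>) - (\<Sum>\<zeta>\<in>east_alive L. east_jump q L \<eta> \<zeta>)"
    using sum.subset_diff[OF east_alive_subset finite_east_states, of "east_jump q L \<eta>"] by simp
  also have "\<dots> = 1 - east_survival_jump q L (Suc 0) \<eta>"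
    using east_jump_row_sum[OF hs] by (simp add: east_survival_jump_Suc east_survival_jump_0 cong: sum.cong)
  finally show ?thesis .
qed

lemma east_survival_jump_decay_cleared:
  assumes L: "1 \<le> L" and "\<eta> \<in> east_alive L" "\<forall>y. y \<le> j \<longrightarrow> \<not> \<eta> y" "L \<le> j + Suc n"
  shows "(q / real (Suc L)) ^ Suc n \<le> 1 - east_survival_jump q L (Suc n) \<eta>"
  using assms(2-)
proof (induction n arbitrary: \<eta> j)
  case 0
  have "east_c \<eta> L = 1"
    using 0 by (cases "L = 1") (auto simp: east_c_def)
  then show ?case using east_survival_jump_one_le[OF L "0.prems"(1)] by simp
next
  case (Suc n)
  have hs: "\<eta> \<in> east_states L" and nL: "\<not> \<eta> L" using Suc.prems(1) by (auto simp: east_alive_def)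
  define x where "x = min (Suc j) L"
  note next_site = east_clear_next_site[OF L hs Suc.prems(2), folded x_def]
  have h': "\<eta>(x := False) \<in> east_alive L"
    using fun_upd_False_in_east_states[OF hs] nL by (auto simp: east_alive_def)
  have "L \<le> Suc j + Suc n" using Suc.prems(3) by simp
  note IH = Suc.IH[OF h' next_site(3) this]
  have "q / real (Suc L) * (q / real (Suc L)) ^ Suc n
      \<le> east_jump q L \<eta> (\<eta>(x := False)) * (1 - east_survival_jump q L (Suc n) (\<eta>(x := False)))"
    by (intro mult_mono east_jump_clear_ge next_site IH) (auto intro: east_jump_nonneg simp: q_nonneg)
  also have "\<dots> \<le> 1 - east_survival_jump q L (Suc (Suc n)) \<eta>"
    by (rule east_survival_jump_step[OF Suc.prems(1) h'])
  finally show ?case by simp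
qed

lemma east_survival_jump_L:
  assumes L: "1 \<le> L" and h: "\<eta> \<in> east_alive L"
  shows "east_survival_jump q L L \<eta> \<le> east_theta q L"
proof -
  obtain m where m: "L = Suc m" using L by (cases L) auto
  have "\<forall>y. y \<le> 0 \<longrightarrow> \<not> \<eta> y" using h by (auto simp: east_alive_def east_states_def)
  then show ?thesis
    using east_survival_jump_decay_cleared[OF L h, of 0 m] m by (simp add: east_theta_def)
qed

lemma east_survival_jump_add:
  assumes "\<eta> \<in> east_alive L"
  shows "east_survival_jump q L (m + n) \<eta>
      = (\<Sum>\<zeta>\<in>east_alive L. mat_pow (east_alive L) (east_jump q L) m \<eta> \<zeta> * east_survival_jump q L n \<zeta>)"
  unfolding east_survival_jump_def by (rule sum_mat_pow_add[OF finite_east_alive assms])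

lemma east_survival_jump_bound:
  assumes L: "1 \<le> L"
  shows "\<eta> \<in> east_alive L \<Longrightarrow> east_survival_jump q L n \<eta> \<le> east_theta q L ^ (n div L)"
proof (induction n arbitrary: \<eta> rule: less_induct)
  case (less n)
  define \<theta> where "\<theta> = east_theta q L"
  have th0: "0 \<le> \<theta>"
    using east_survival_jump_L[OF L less.prems] east_survival_jump_nonneg[of L L \<eta>] by (simp add: \<theta>_def)
  show ?case
  proof (cases "n < L")
    case True then show ?thesis using east_survival_jump_le_one[OF less.prems] by simp
  next
    case False
    then obtain m where m: "n = L + m" by (metis le_add_diff_inverse not_less)
    have "east_survival_jump q L n \<eta>
        = (\<Sum>\<zeta>\<in>east_alive L. mat_pow (east_alive L) (east_jump q L) L \<eta> \<zeta> * east_survival_jump q L m \<zeta>)"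
      unfolding m by (rule east_survival_jump_add[OF less.prems])
    also have "\<dots> \<le> (\<Sum>\<zeta>\<in>east_alive L. mat_pow (east_alive L) (east_jump q L) L \<eta> \<zeta> * \<theta> ^ (m div L))"
      using less.IH[of m] m L by (intro sum_mono mult_left_mono east_alive_pow_nonneg) (auto simp: \<theta>_def)
    also have "\<dots> = east_survival_jump q L L \<eta> * \<theta> ^ (m div L)"
      by (simp add: east_survival_jump_def sum_distrib_right)
    also have "\<dots> \<le> \<theta> * \<theta> ^ (m div L)"
      using east_survival_jump_L[OF L less.prems] th0 by (intro mult_right_mono) (auto simp: \<theta>_def)
    also have "\<dots> = \<theta> ^ (n div L)" using L by (simp add: m)
    finally show ?thesis by (simp add: \<theta>_def)
  qed
qed

lemma summable_east_survival_jump: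
  assumes L: "1 \<le> L" and h: "\<eta> \<in> east_alive L"
  shows "summable (\<lambda>n. east_survival_jump q L n \<eta>)"
  using east_theta_bounds[OF L] L east_survival_jump_nonneg east_survival_jump_bound[OF L h]
  by (rule summable_power_div_bound)

lemma east_hit_mean_nonneg: "1 \<le> L \<Longrightarrow> \<eta> \<in> east_alive L \<Longrightarrow> 0 \<le> east_hit_mean q L \<eta>"
  unfolding east_hit_mean_def
  by (intro divide_nonneg_pos suminf_nonneg summable_east_survival_jump east_survival_jump_nonneg) auto

lemma east_hit_mean_equation:
  assumes L: "1 \<le> L" and h: "\<eta> \<in> east_alive L"
  shows "(\<Sum>\<zeta>\<in>east_alive L. east_rate q L \<eta> \<zeta> * east_hit_mean q L \<zeta>) = -1"
proof -
  define c where "c = real (Suc L)"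
  have c0: "c > 0" by (simp add: c_def)
  have "(\<Sum>\<zeta>\<in>east_alive L. east_jump q L \<eta> \<zeta> * (\<Sum>n. east_survival_jump q L n \<zeta>))
      = (\<Sum>\<zeta>\<in>east_alive L. \<Sum>n. east_jump q L \<eta> \<zeta> * east_survival_jump q L n \<zeta>)"
    by (intro sum.cong refl suminf_mult[symmetric] summable_east_survival_jump[OF L]) 
  also have "\<dots> = (\<Sum>n. \<Sum>\<zeta>\<in>east_alive L. east_jump q L \<eta> \<zeta> * east_survival_jump q L n \<zeta>)"
    by (rule suminf_sum[symmetric]) (intro summable_mult summable_east_survival_jump[OF L])
  also have "\<dots> = (\<Sum>n. east_survival_jump q L (Suc n) \<eta>)" by (simp add: east_survival_jump_Suc)
  also have "\<dots> = (\<Sum>n. east_survival_jump q L n \<eta>) - 1"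
    using suminf_split_head[OF summable_east_survival_jump[OF L h]] east_survival_jump_0[OF h] by simp
  finally have A: "(\<Sum>\<zeta>\<in>east_alive L. east_jump q L \<eta> \<zeta> * (\<Sum>n. east_survival_jump q L n \<zeta>))
      = (\<Sum>n. east_survival_jump q L n \<eta>) - 1" .
  have "(\<Sum>\<zeta>\<in>east_alive L. east_jump q L \<eta> \<zeta> * (\<Sum>n. east_survival_jump q L n \<zeta>))
      = (\<Sum>\<zeta>\<in>east_alive L. (if \<eta> = \<zeta> then 1 else 0) * (\<Sum>n. east_survival_jump q L n \<zeta>))
        + (\<Sum>\<zeta>\<in>east_alive L. east_rate q L \<eta> \<zeta> * east_hit_mean q L \<zeta>)"
    by (simp add: east_jump_def east_hit_mean_def sum.distrib algebra_simps)
  also have "(\<Sum>\<zeta>\<in>east_alive L. (if \<eta> = \<zeta> then 1 else 0) * (\<Sum>n. east_survival_jump q L n \<zeta>))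
      = (\<Sum>n. east_survival_jump q L n \<eta>)"
    using h finite_east_alive by simp
  finally show ?thesis using A by simp
qed

text \<open>Iterating \<open>P w \<le> w\<close> gives \<open>w \<eta> \<ge> \<Sum>\<^sub>\<sigma> P^n(\<eta>,\<sigma>) w \<sigma> \<ge> -B \<cdot> P(survival for n jumps)\<close>,
  and the survival probability tends to \<open>0\<close>.\<close>

lemma east_alive_minimum_principle:
  assumes L: "1 \<le> L" and w: "\<And>\<eta>. \<eta> \<in> east_alive L \<Longrightarrow> (\<Sum>\<zeta>\<in>east_alive L. east_rate q L \<eta> \<zeta> * w \<zeta>) \<le> 0"
    and h: "\<eta> \<in> east_alive L"
  shows "0 \<le> w \<eta>"
proof -
  let ?S = "east_alive L" and ?P = "east_jump q L"
  have Pw: "(\<Sum>\<zeta>\<in>?S. ?P \<eta> \<zeta> * w \<zeta>) \<le> w \<eta>" if h: "\<eta> \<in> ?S" for \<eta>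
  proof -
    have "(\<Sum>\<zeta>\<in>?S. ?P \<eta> \<zeta> * w \<zeta>)
        = (\<Sum>\<zeta>\<in>?S. (if \<eta> = \<zeta> then 1 else 0) * w \<zeta>) + (\<Sum>\<zeta>\<in>?S. east_rate q L \<eta> \<zeta> * w \<zeta>) / real (Suc L)"
      by (simp add: east_jump_def sum.distrib algebra_simps sum_divide_distrib)
    also have "\<dots> \<le> w \<eta>" using w[OF h] h finite_east_alive by (simp add: divide_nonpos_pos)
    finally show ?thesis .
  qed
  have pow: "(\<Sum>\<sigma>\<in>?S. mat_pow ?S ?P n \<eta> \<sigma> * w \<sigma>) \<le> w \<eta>" for n
    by (rule mat_pow_superharmonic[OF finite_east_alive east_jump_nonneg]) (use Pw h in auto)
  define B where "B = (\<Sum>\<sigma>\<in>?S. \<bar>w \<sigma>\<bar>)"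
  have lb: "- B * east_survival_jump q L n \<eta> \<le> w \<eta>" for n
  proof -
    have "- B * east_survival_jump q L n \<eta> = (\<Sum>\<sigma>\<in>?S. mat_pow ?S ?P n \<eta> \<sigma> * (- B))"
      by (simp add: east_survival_jump_def sum_distrib_right sum_distrib_left sum_negf mult.commute)
    also have "\<dots> \<le> (\<Sum>\<sigma>\<in>?S. mat_pow ?S ?P n \<eta> \<sigma> * w \<sigma>)"
    proof (intro sum_mono mult_left_mono east_alive_pow_nonneg)
      fix \<sigma> assume "\<sigma> \<in> ?S"
      then have "\<bar>w \<sigma>\<bar> \<le> B" unfolding B_def by (intro member_le_sum finite_east_alive) auto
      then show "- B \<le> w \<sigma>" by simp
    qed
    also have "\<dots> \<le> w \<eta>" by (rule pow)
    finally show ?thesis .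
  qed
  have "(\<lambda>n. - B * east_survival_jump q L n \<eta>) \<longlonglongrightarrow> - B * 0"
    by (intro tendsto_mult tendsto_const summable_LIMSEQ_zero summable_east_survival_jump[OF L h])
  then show ?thesis using lb by (intro LIMSEQ_le_const2[of _ 0]) auto
qed


lemma east_gen_nonneg_at_zero:
  assumes "0 \<le> q" "q \<le> 1" and "\<And>\<zeta>. 0 \<le> f \<zeta>" and "f \<eta> = 0"
  shows "0 \<le> east_gen q L f \<eta>"
  unfolding east_gen_def using assms by (intro sum_nonneg mult_nonneg_nonneg east_c_nonneg) auto

lemma east_hit_lift_nonneg:
  assumes "1 \<le> L"
  shows "0 \<le> east_hit_lift q L \<zeta>"
proof -
  have "\<zeta>(L := False) \<in> east_alive L" if "\<zeta> \<in> east_alive (Suc L)"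
    using that by (auto simp: east_alive_def east_states_def le_Suc_eq)
  then show ?thesis using east_hit_mean_nonneg[OF assms] by (simp add: east_hit_lift_def)
qed

text \<open>On configurations with \<open>\<eta>_L = 1\<close>, the sites below \<open>L\<close> see the dynamics on \<open>{1..L}\<close>
  started from \<open>\<eta>_L := 0\<close>, site \<open>L+1\<close> is blocked, and site \<open>L\<close> is reset to \<open>0\<close> at rate
  \<open>q\<close> instead of \<open>1 - q\<close> for the killed chain on \<open>{1..L}\<close>.\<close>

lemma east_gen_hit_lift_set:
  assumes L: "1 \<le> L" and h: "\<eta> \<in> east_alive (Suc L)" and \<eta>L: "\<eta> L"
  shows "east_gen q (Suc L) (east_hit_lift q L) \<eta>
    = -1 + east_c \<eta> L * (1 - 2 * q) * east_hit_mean q L (\<eta>(L := False))"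
proof -
  define \<xi> where "\<xi> = \<eta>(L := False)"
  define g where "g = east_hit_lift q L"
  define hh where "hh \<zeta> = (if \<zeta> \<in> east_alive L then east_hit_mean q L \<zeta> else 0)" for \<zeta>
  have hs: "\<eta> \<in> east_states (Suc L)" and nS: "\<not> \<eta> (Suc L)" using h by (auto simp: east_alive_def)
  have \<xi>_alive: "\<xi> \<in> east_alive L"
    using hs nS by (auto simp: \<xi>_def east_alive_def east_states_def le_Suc_eq)
  have \<xi>_states: "\<xi> \<in> east_states L" using \<xi>_alive by (simp add: east_alive_def)
  have g\<eta>: "g \<eta> = east_hit_mean q L \<xi>" using h \<eta>L by (simp add: g_def east_hit_lift_def \<xi>_def)
  have c\<xi>: "east_c \<xi> x = east_c \<eta> x" if "x \<le> L" for x using that L by (auto simp: east_c_def \<xi>_def)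
  define T' where "T' x = east_c \<eta> x * ((1 - q) * g (\<eta>(x := True)) + q * g (\<eta>(x := False)) - g \<eta>)" for x
  define T where "T x = east_c \<xi> x * ((1 - q) * hh (\<xi>(x := True)) + q * hh (\<xi>(x := False)) - hh \<xi>)" for x
  have gen_Suc: "east_gen q (Suc L) g \<eta> = (\<Sum>x\<in>{1..<L}. T' x) + T' L + T' (Suc L)"
    using L unfolding east_gen_def T'_def by (simp add: sum.last_plus atLeastLessThanSuc_atLeastAtMost)
  have "east_gen q L hh \<xi> = -1"
    using east_hit_mean_equation[OF L \<xi>_alive] sum_east_rate_subset[OF \<xi>_states east_alive_subset]
    by (simp add: hh_def[abs_def])
  then have gen_L: "-1 = (\<Sum>x\<in>{1..<L}. T x) + T L"
    using L unfolding east_gen_def T_def by (simp add: sum.last_plus)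
  have "T' x = T x" if x: "x \<in> {1..<L}" for x
  proof -
    have "g (\<eta>(x := b)) = hh (\<xi>(x := b))" for b
    proof -
      have "\<eta>(x := b) \<in> east_alive (Suc L)"
        using fun_upd_in_east_states[OF hs, of x b] nS x by (auto simp: east_alive_def)
      moreover have "\<xi>(x := b) \<in> east_alive L"
        using fun_upd_in_east_states[OF \<xi>_states, of x b] \<xi>_alive x by (auto simp: east_alive_def)
      moreover have "(\<eta>(x := b))(L := False) = \<xi>(x := b)" using x by (auto simp: \<xi>_def fun_upd_twist)
      ultimately show ?thesis using x \<eta>L by (simp add: g_def east_hit_lift_def hh_def)
    qed
    then show ?thesis using x \<xi>_alive unfolding T'_def T_def g\<eta> by (simp add: c\<xi> hh_def)
  qed
  then have low: "(\<Sum>x\<in>{1..<L}. T' x) = (\<Sum>x\<in>{1..<L}. T x)" by (rule sum.cong[OF refl])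
  have "\<eta>(L := True) = \<eta>" using \<eta>L by (simp add: fun_eq_iff)
  moreover have "g (\<eta>(L := False)) = 0" by (simp add: g_def east_hit_lift_def)
  ultimately have T'_L: "T' L = - east_c \<eta> L * q * east_hit_mean q L \<xi>"
    unfolding T'_def by (simp add: g\<eta> algebra_simps)
  have "hh (\<xi>(L := True)) = 0" "\<xi>(L := False) = \<xi>" "hh \<xi> = east_hit_mean q L \<xi>"
    using \<xi>_alive by (simp_all add: hh_def east_alive_def \<xi>_def)
  then have T_L: "T L = - east_c \<eta> L * (1 - q) * east_hit_mean q L \<xi>"
    unfolding T_def using c\<xi>[of L] by (simp add: algebra_simps)
  have T'_Suc: "T' (Suc L) = 0" using \<eta>L L by (simp add: T'_def east_c_def)
  show ?thesis
    using gen_Suc gen_L low T'_L T_L T'_Suc by (simp add: g_def \<xi>_def algebra_simps)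
qed

lemma east_hit_lift_subsolution:
  assumes L: "1 \<le> L" and h: "\<eta> \<in> east_alive (Suc L)"
  shows "-1 \<le> (\<Sum>\<zeta>\<in>east_alive (Suc L). east_rate q (Suc L) \<eta> \<zeta> * east_hit_lift q L \<zeta>)"
proof -
  have hs: "\<eta> \<in> east_states (Suc L)" using h by (simp add: east_alive_def)
  have "(\<lambda>\<zeta>. if \<zeta> \<in> east_alive (Suc L) then east_hit_lift q L \<zeta> else 0) = east_hit_lift q L"
    by (auto simp: fun_eq_iff east_hit_lift_def)
  then have "(\<Sum>\<zeta>\<in>east_alive (Suc L). east_rate q (Suc L) \<eta> \<zeta> * east_hit_lift q L \<zeta>)
      = east_gen q (Suc L) (east_hit_lift q L) \<eta>"
    using sum_east_rate_subset[OF hs east_alive_subset, of q "east_hit_lift q L"] by simp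
  moreover have "-1 \<le> east_gen q (Suc L) (east_hit_lift q L) \<eta>"
  proof (cases "\<eta> L")
    case True
    have "\<eta>(L := False) \<in> east_alive L"
      using h by (auto simp: east_alive_def east_states_def le_Suc_eq)
    \<comment> \<open>The only place where \<open>q \<le> 1/2\<close> is used.\<close>
    then have "0 \<le> east_c \<eta> L * (1 - 2 * q) * east_hit_mean q L (\<eta>(L := False))"
      using east_hit_mean_nonneg[OF L] east_c_nonneg[of \<eta> L] q_le_half by simp
    then show ?thesis using east_gen_hit_lift_set[OF L h True] by simp
  next
    case False
    then have "east_hit_lift q L \<eta> = 0" by (simp add: east_hit_lift_def)
    then have "0 \<le> east_gen q (Suc L) (east_hit_lift q L) \<eta>"
      by (intro east_gen_nonneg_at_zero[OF q_nonneg q_le_one] east_hit_lift_nonneg[OF L])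
    then show ?thesis by simp
  qed
  ultimately show ?thesis by simp
qed

lemma east_hit_mean_Suc_ge:
  assumes L: "1 \<le> L"
  shows "east_hit_mean q L (east_start L) \<le> east_hit_mean q (Suc L) (east_start (Suc L))"
proof -
  define w where "w \<zeta> = east_hit_mean q (Suc L) \<zeta> - east_hit_lift q L \<zeta>" for \<zeta>
  have L1: "1 \<le> Suc L" by simp
  have "0 \<le> w (east_start (Suc L))"
  proof (rule east_alive_minimum_principle[OF L1 _ east_start_alive[OF L1]])
    fix \<eta> assume h: "\<eta> \<in> east_alive (Suc L)"
    have "(\<Sum>\<zeta>\<in>east_alive (Suc L). east_rate q (Suc L) \<eta> \<zeta> * w \<zeta>)
       = (\<Sum>\<zeta>\<in>east_alive (Suc L). east_rate q (Suc L) \<eta> \<zeta> * east_hit_mean q (Suc L) \<zeta>)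
         - (\<Sum>\<zeta>\<in>east_alive (Suc L). east_rate q (Suc L) \<eta> \<zeta> * east_hit_lift q L \<zeta>)"
      by (simp add: w_def right_diff_distrib sum_subtractf)
    also have "\<dots> \<le> 0"
      using east_hit_mean_equation[OF L1 h] east_hit_lift_subsolution[OF L h] by simp
    finally show "(\<Sum>\<zeta>\<in>east_alive (Suc L). east_rate q (Suc L) \<eta> \<zeta> * w \<zeta>) \<le> 0" .
  qed
  moreover have "east_hit_lift q L (east_start (Suc L)) = east_hit_mean q L (east_start L)"
  proof -
    have "(east_start (Suc L))(L := False) = east_start L" by (auto simp: east_start_def fun_eq_iff)
    then show ?thesis
      using east_start_alive[OF L1] L by (simp add: east_hit_lift_def east_start_def)
  qed
  ultimately show ?thesis by (simp add: w_def)
qed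

lemma east_jump_abs_le: "\<bar>east_jump q L a b\<bar> \<le> 2"
proof -
  have "\<bar>east_rate q L a b\<bar> \<le> real L" by (rule east_rate_bounded)
  then have "\<bar>east_rate q L a b / real (Suc L)\<bar> \<le> 1" by (simp add: divide_le_eq)
  have "\<bar>east_jump q L a b\<bar> \<le> \<bar>if a = b then 1 else 0\<bar> + \<bar>east_rate q L a b / real (Suc L)\<bar>"
    unfolding east_jump_def by (rule abs_triangle_ineq)
  also have "\<dots> \<le> 1 + 1" using \<open>\<bar>east_rate q L a b / real (Suc L)\<bar> \<le> 1\<close> by (intro add_mono) auto
  finally show ?thesis by simp
qed

lemma east_survival_uniformization:
  assumes h: "\<eta> \<in> east_alive L"
  shows "east_survival q L \<eta> t = exp (- (real (Suc L) * t)) *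
     (\<Sum>n. (real (Suc L) * t) ^ n / fact n * east_survival_jump q L n \<eta>)"
proof -
  let ?S = "east_alive L" and ?c = "real (Suc L)"
  have "mat_exp ?S (east_rate q L) t \<eta> \<sigma>
      = exp (- (?c * t)) * (\<Sum>n. (?c * t) ^ n / fact n * mat_pow ?S (east_jump q L) n \<eta> \<sigma>)" for \<sigma>
    unfolding east_jump_def
    by (rule mat_exp_uniformization[OF finite_east_alive h _ east_rate_bounded]) simp
  then have "east_survival q L \<eta> t
      = exp (- (?c * t)) * (\<Sum>\<sigma>\<in>?S. \<Sum>n. (?c * t) ^ n / fact n * mat_pow ?S (east_jump q L) n \<eta> \<sigma>)"
    unfolding east_survival_def east_states_diff_target by (simp add: sum_distrib_left)
  also have "(\<Sum>\<sigma>\<in>?S. \<Sum>n. (?c * t) ^ n / fact n * mat_pow ?S (east_jump q L) n \<eta> \<sigma>)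
      = (\<Sum>n. \<Sum>\<sigma>\<in>?S. (?c * t) ^ n / fact n * mat_pow ?S (east_jump q L) n \<eta> \<sigma>)"
    by (rule suminf_sum[symmetric]) (rule summable_mat_exp_series[OF finite_east_alive east_jump_abs_le])
  finally show ?thesis by (simp add: east_survival_jump_def sum_distrib_left)
qed

lemma T_hit_eq_east_hit_mean:
  assumes L: "1 \<le> L"
  shows "T_hit q L = east_hit_mean q L (east_start L)"
proof -
  have h: "east_start L \<in> east_alive L" by (rule east_start_alive[OF L])
  have "(east_survival q L (east_start L) has_integral east_hit_mean q L (east_start L)) {0..}"
    unfolding east_survival_uniformization[OF h, abs_def] east_hit_mean_def
    by (rule has_integral_poisson_mixture)
       (auto intro: east_survival_jump_nonneg summable_east_survival_jump[OF L h])
  then show ?thesis unfolding T_hit_def by (rule integral_unique)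
qed

lemma T_hit_mono:
  assumes "1 \<le> L" "L \<le> L'"
  shows "T_hit q L \<le> T_hit q L'"
  using assms(2)
proof (induction L' rule: dec_induct)
  case (step n)
  then have "1 \<le> n" using assms(1) by simp
  then have "T_hit q n \<le> T_hit q (Suc n)"
    unfolding T_hit_eq_east_hit_mean[OF \<open>1 \<le> n\<close>] T_hit_eq_east_hit_mean[OF le_SucI[OF \<open>1 \<le> n\<close>]]
    by (rule east_hit_mean_Suc_ge)
  then show ?case using step(3) by simp
qed simp

end

theorem mainTheorem6:
  fixes q :: real
  assumes "0 < q" and "q < 1/2"
  shows "(\<forall>L L'. 1 \<le> L \<longrightarrow> L \<le> L' \<longrightarrow> T_rel q L \<le> T_rel q L') \<and>
         (\<forall>L L'. 1 \<le> L \<longrightarrow> L \<le> L' \<longrightarrow> T_mix q L \<le> T_mix q L') \<and>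
         (\<forall>L L'. 1 \<le> L \<longrightarrow> L \<le> L' \<longrightarrow> T_hit q L \<le> T_hit q L')"
proof -
  interpret east_param q using assms by unfold_locales auto
  show ?thesis using T_rel_mono T_mix_mono T_hit_mono by blast
qed

end
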